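(* Let $R$ be a discrete valuation ring with uniformizer $\pi$ and let $\Gamma$ be an abstract group. Assume that every $V\in\mathrm{Rep}_R(\Gamma)$ with $\pi V=0$ admits a weak lift. Then every $E\in\mathrm{Rep}_R(\Gamma)$ admits a weak lift; that is, $\Gamma$ is Tannakian over $R$.
   Context: $\mathrm{Rep}_R(\Gamma)$ is the category of left $R\Gamma$-modules which are finitely generated as $R$-modules; $\mathrm{Rep}^\circ_R(\Gamma)$ is the full subcategory of those which are projective (equivalently free) $R$-modules. A weak lift of $V\in\mathrm{Rep}_R(\Gamma)$ is an object $\widetilde V\in\mathrm{Rep}^\circ_R(\Gamma)$ together with a surjective morphism $\widetilde V\to V$ of $R\Gamma$-modules. $\Gamma$ is called Tannakian over $R$ if every object of $\mathrm{Rep}_R(\Gamma)$ admits a weak lift. *)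

theory Defs
  imports "HOL-Algebra.Algebra"
begin

definition dvr_uniformizer :: "'r ring \<Rightarrow> 'r \<Rightarrow> bool" where
  "dvr_uniformizer R p \<longleftrightarrow>
     principal_domain R \<and> p \<in> carrier R \<and> p \<noteq> \<zero>\<^bsub>R\<^esub> \<and>
     maximalideal (PIdl\<^bsub>R\<^esub> p) R \<and>
     (\<forall>I. maximalideal I R \<longrightarrow> I = PIdl\<^bsub>R\<^esub> p)"

definition is_rep :: "'g monoid \<Rightarrow> 'r ring \<Rightarrow> ('r, 'm) module \<Rightarrow> ('g \<Rightarrow> 'm \<Rightarrow> 'm) \<Rightarrow> bool" where
  "is_rep G R M rho \<longleftrightarrow> group G \<and> module R M \<and>
     (\<forall>g\<in>carrier G. \<forall>x\<in>carrier M. rho g x \<in> carrier M) \<and>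
     (\<forall>g\<in>carrier G. \<forall>x\<in>carrier M. \<forall>y\<in>carrier M.
         rho g (x \<oplus>\<^bsub>M\<^esub> y) = rho g x \<oplus>\<^bsub>M\<^esub> rho g y) \<and>
     (\<forall>g\<in>carrier G. \<forall>a\<in>carrier R. \<forall>x\<in>carrier M.
         rho g (a \<odot>\<^bsub>M\<^esub> x) = a \<odot>\<^bsub>M\<^esub> rho g x) \<and>
     (\<forall>x\<in>carrier M. rho \<one>\<^bsub>G\<^esub> x = x) \<and>
     (\<forall>g\<in>carrier G. \<forall>h\<in>carrier G. \<forall>x\<in>carrier M.
         rho (g \<otimes>\<^bsub>G\<^esub> h) x = rho g (rho h x))"

definition fin_gen :: "'r ring \<Rightarrow> ('r, 'm) module \<Rightarrow> bool" where
  "fin_gen R M \<longleftrightarrow> (\<exists>S. finite S \<and> S \<subseteq> carrier M \<and>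
     (\<forall>x\<in>carrier M. \<exists>c. c \<in> S \<rightarrow> carrier R \<and>
         x = (\<Oplus>\<^bsub>M\<^esub>s\<in>S. c s \<odot>\<^bsub>M\<^esub> s)))"

definition fin_free :: "'r ring \<Rightarrow> ('r, 'm) module \<Rightarrow> bool" where
  "fin_free R M \<longleftrightarrow> (\<exists>B. finite B \<and> B \<subseteq> carrier M \<and>
     (\<forall>x\<in>carrier M. \<exists>!c. c \<in> B \<rightarrow>\<^sub>E carrier R \<and>
         x = (\<Oplus>\<^bsub>M\<^esub>b\<in>B. c b \<odot>\<^bsub>M\<^esub> b)))"

definition in_Rep :: "'g monoid \<Rightarrow> 'r ring \<Rightarrow> ('r, 'm) module \<Rightarrow> ('g \<Rightarrow> 'm \<Rightarrow> 'm) \<Rightarrow> bool" where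
  "in_Rep G R M rho \<longleftrightarrow> is_rep G R M rho \<and> fin_gen R M"

definition in_Rep_free :: "'g monoid \<Rightarrow> 'r ring \<Rightarrow> ('r, 'm) module \<Rightarrow> ('g \<Rightarrow> 'm \<Rightarrow> 'm) \<Rightarrow> bool" where
  "in_Rep_free G R M rho \<longleftrightarrow> is_rep G R M rho \<and> fin_gen R M \<and> fin_free R M"

definition rep_hom :: "'g monoid \<Rightarrow> 'r ring \<Rightarrow> ('r, 'm) module \<Rightarrow> ('g \<Rightarrow> 'm \<Rightarrow> 'm)
     \<Rightarrow> ('r, 'n) module \<Rightarrow> ('g \<Rightarrow> 'n \<Rightarrow> 'n) \<Rightarrow> ('m \<Rightarrow> 'n) \<Rightarrow> bool" where
  "rep_hom G R M rho N sigma f \<longleftrightarrow>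
     f \<in> carrier M \<rightarrow> carrier N \<and>
     (\<forall>x\<in>carrier M. \<forall>y\<in>carrier M. f (x \<oplus>\<^bsub>M\<^esub> y) = f x \<oplus>\<^bsub>N\<^esub> f y) \<and>
     (\<forall>a\<in>carrier R. \<forall>x\<in>carrier M. f (a \<odot>\<^bsub>M\<^esub> x) = a \<odot>\<^bsub>N\<^esub> f x) \<and>
     (\<forall>g\<in>carrier G. \<forall>x\<in>carrier M. f (rho g x) = sigma g (f x))"

definition is_weak_lift :: "'g monoid \<Rightarrow> 'r ring \<Rightarrow> ('r, 'm) module \<Rightarrow> ('g \<Rightarrow> 'm \<Rightarrow> 'm)
     \<Rightarrow> ('r, 'n) module \<Rightarrow> ('g \<Rightarrow> 'n \<Rightarrow> 'n) \<Rightarrow> ('n \<Rightarrow> 'm) \<Rightarrow> bool" where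
  "is_weak_lift G R V rho L lam f \<longleftrightarrow>
     in_Rep_free G R L lam \<and> rep_hom G R L lam V rho f \<and> f ` carrier L = carrier V"

text \<open>A free R-module of finite rank n is isomorphic to
  one whose carrier consists of functions nat => R (supported on {0..<n}), so
  fixing this carrier type for the lift loses no generality.\<close>
definition has_weak_lift :: "'g monoid \<Rightarrow> 'r ring \<Rightarrow> ('r, 'm) module \<Rightarrow> ('g \<Rightarrow> 'm \<Rightarrow> 'm) \<Rightarrow> bool" where
  "has_weak_lift G R V rho \<longleftrightarrow>
     (\<exists>(L :: ('r, nat \<Rightarrow> 'r) module) lam f. is_weak_lift G R V rho L lam f)"

end

theory Submission
  imports Defs
begin

text \<open>Choose n such that p^n kills the p-power torsion of E, which exists as E is finitely
  generated, and induct on n. For n = 0, E is torsion-free, hence free over the discrete valuation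
  ring, and is its own weak lift. Otherwise E/pE is killed by p, so it has a weak lift L \<rightarrow> E/pE
  by hypothesis. The fibre product P of L and E over E/pE is finitely generated and surjects onto
  E; since L is free, the torsion of P lies in 0 \<times> pE and is killed by p^(n-1). By induction P
  has a weak lift, and composing it with P \<rightarrow> E gives one of E. As the hypothesis only speaks about representations
  on one fixed carrier type, each representation met on the way is first replaced by an isomorphic
  copy on that type.\<close>

section \<open>Discrete valuation rings\<close>

locale dvr = principal_domain R for R (structure) +
  fixes p
  assumes p_carr: "p \<in> carrier R" and p_nz: "p \<noteq> \<zero>"
    and p_max: "maximalideal (PIdl p) R"
    and p_uniq: "\<And>I. maximalideal I R \<Longrightarrow> I = PIdl p"
begin

lemma p_not_unit: "p \<notin> Units R"
  using p_max ideal_eq_carrier_iff[OF p_carr]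
  unfolding maximalideal_def maximalideal_axioms_def by auto

lemma p_pow_closed[simp]: "p [^] (n::nat) \<in> carrier R"
  using p_carr by simp

lemma p_pow_nonzero: "p [^] (n::nat) \<noteq> \<zero>"
proof (induction n)
  case 0 then show ?case by simp
next
  case (Suc n) then show ?case
    using p_nz p_carr integral[of "p [^] n" p] by (auto simp: nat_pow_Suc)
qed

lemma nonunit_eq_mult_p:
  assumes a: "a \<in> carrier R" "a \<notin> Units R"
  shows "\<exists>y\<in>carrier R. a = y \<otimes> p"
proof (cases "a = \<zero>")
  case True then show ?thesis using p_carr by (intro bexI[of _ \<zero>]) auto
next
  case False
  obtain b where b: "b \<in> carrier R" "ring_irreducible b" "b divides a"
    using exists_irreducible_divisor[of a] a False by blast
  have "maximalideal (PIdl b) R" using irreducible_imp_maximalideal b by blast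
  hence eq: "PIdl b = PIdl p" using p_uniq by blast
  from b(3) obtain r where r: "r \<in> carrier R" "a = b \<otimes> r" unfolding factor_def by blast
  hence "a \<in> PIdl b" unfolding cgenideal_def using b(1) m_comm by blast
  hence "a \<in> PIdl p" using eq by simp
  thus ?thesis unfolding cgenideal_def by blast
qed

lemma cofactor_ideal_mono:
  assumes c: "c1 \<in> carrier R" "c2 \<in> carrier R"
    and eq: "c1 \<otimes> p [^] n1 = c2 \<otimes> p [^] n2" and le: "n1 \<le> (n2::nat)"
  shows "PIdl c1 \<subseteq> PIdl c2"
proof -
  obtain d where d: "n2 = d + n1" using le le_Suc_ex by (metis add.commute)
  have "p [^] n2 = p [^] d \<otimes> p [^] n1" unfolding d using p_carr by (simp add: nat_pow_mult)
  hence "c1 \<otimes> p [^] n1 = (c2 \<otimes> p [^] d) \<otimes> p [^] n1"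
    using c eq p_carr by (simp add: m_assoc)
  hence "c1 = c2 \<otimes> p [^] d"
    using c p_pow_nonzero[of n1] m_rcancel[of "p [^] n1" c1 "c2 \<otimes> p [^] d"] p_carr by simp
  hence "c1 \<in> PIdl c2" unfolding cgenideal_def using c p_carr m_comm by blast
  thus ?thesis using c cgenideal_minimal[of "PIdl c2" c1] cgenideal_ideal[of c2] by blast
qed

text \<open>If a were divisible by every power of p, the cofactors would generate an ascending chain of
  principal ideals, whose stabilisation forces p to be a unit.\<close>
lemma ex_not_divisible_by_p_pow:
  assumes a: "a \<in> carrier R" "a \<noteq> \<zero>"
  shows "\<exists>n::nat. \<not> (\<exists>c\<in>carrier R. a = c \<otimes> p [^] n)"
proof (rule ccontr)
  assume "\<not> ?thesis"
  hence all: "\<And>n::nat. \<exists>c\<in>carrier R. a = c \<otimes> p [^] n" by blast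
  define C where "C = {PIdl c | c. c \<in> carrier R \<and> (\<exists>n::nat. a = c \<otimes> p [^] n)}"
  have cne: "C \<noteq> {}" unfolding C_def using all[of 0] by blast
  have chain: "subset.chain {I. ideal I R} C"
    unfolding pred_on.chain_def
  proof (intro conjI ballI)
    show "C \<subseteq> {I. ideal I R}" unfolding C_def using cgenideal_ideal by blast
  next
    fix x y assume "x \<in> C" "y \<in> C"
    then obtain c1 c2 n1 n2 where "x = PIdl c1" "y = PIdl c2" "c1 \<in> carrier R" "c2 \<in> carrier R"
      "a = c1 \<otimes> p [^] (n1::nat)" "a = c2 \<otimes> p [^] (n2::nat)" unfolding C_def by blast
    hence "x \<subseteq> y \<or> y \<subseteq> x"
      using cofactor_ideal_mono[of c1 c2 n1 n2] cofactor_ideal_mono[of c2 c1 n2 n1]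
      by (cases "n1 \<le> n2") auto
    thus "(\<subset>)\<^sup>=\<^sup>= x y \<or> (\<subset>)\<^sup>=\<^sup>= y x" by auto
  qed
  have "\<Union>C \<in> C" using ideal_chain_is_trivial[OF cne chain] .
  then obtain cs m where cs: "\<Union>C = PIdl cs" "cs \<in> carrier R" "a = cs \<otimes> p [^] (m::nat)"
    unfolding C_def by blast
  obtain c' where c': "c' \<in> carrier R" "a = c' \<otimes> p [^] Suc m" using all by blast
  have "PIdl c' \<in> C" unfolding C_def using c' by blast
  hence "c' \<in> PIdl cs" using cs(1) cgenideal_self[OF c'(1)] by blast
  then obtain z where z: "z \<in> carrier R" "c' = z \<otimes> cs" unfolding cgenideal_def by blast
  have "\<one> \<otimes> (cs \<otimes> p [^] m) = (z \<otimes> p) \<otimes> (cs \<otimes> p [^] m)"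
  proof -
    have e1: "(z \<otimes> p) \<otimes> (cs \<otimes> p [^] m) = (z \<otimes> cs) \<otimes> (p [^] m \<otimes> p)"
      using z cs p_carr by (simp add: m_assoc m_lcomm[of p cs] m_comm[of p "p [^] m"])
    show ?thesis using e1 cs c' z by (simp add: nat_pow_Suc)
  qed
  moreover have "cs \<otimes> p [^] m \<noteq> \<zero>" using cs a by simp
  ultimately have "\<one> = z \<otimes> p"
    using m_rcancel[of "cs \<otimes> p [^] m" "\<one>" "z \<otimes> p"] cs z p_carr by simp
  moreover have "p \<otimes> z = z \<otimes> p" using z p_carr m_comm by simp
  ultimately have "p \<in> Units R" using z p_carr unfolding Units_def by auto
  thus False using p_not_unit by simp
qed

lemma eq_unit_mult_p_pow:
  assumes a: "a \<in> carrier R" "a \<noteq> \<zero>"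
  shows "\<exists>u (j::nat). u \<in> Units R \<and> a = u \<otimes> p [^] j"
proof -
  define P where "P n \<longleftrightarrow> (\<exists>c\<in>carrier R. a = c \<otimes> p [^] (n::nat))" for n
  have ex: "\<exists>n. \<not> P n" using ex_not_divisible_by_p_pow[OF a] unfolding P_def by blast
  define n0 where "n0 = (LEAST n. \<not> P n)"
  have n0: "\<not> P n0" unfolding n0_def using ex LeastI_ex by metis
  have "P 0" unfolding P_def using a by (intro bexI[of _ a]) auto
  hence "n0 \<noteq> 0" using n0 by (cases n0) auto
  then obtain k where k: "n0 = Suc k" using not0_implies_Suc by blast
  have "P k" using not_less_Least[of k "\<lambda>n. \<not> P n"] k unfolding n0_def by auto
  then obtain c where c: "c \<in> carrier R" "a = c \<otimes> p [^] k" unfolding P_def by blast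
  show ?thesis
  proof (cases "c \<in> Units R")
    case True then show ?thesis using c by blast
  next
    case False
    then obtain y where y: "y \<in> carrier R" "c = y \<otimes> p" using nonunit_eq_mult_p c by blast
    have "p [^] n0 = p \<otimes> p [^] k" using k p_carr nat_pow_Suc2[of p k] by metis
    hence "a = y \<otimes> p [^] n0" using c y k p_carr by (simp add: m_assoc)
    hence "P n0" unfolding P_def using y by blast
    thus ?thesis using n0 by simp
  qed
qed

end

lemma dvr_uniformizer_imp_dvr: "dvr_uniformizer R p \<Longrightarrow> dvr R p"
  unfolding dvr_uniformizer_def dvr_def dvr_axioms_def by blast

section \<open>Linear spans\<close>

lemma (in abelian_group) add_minus_add:
  assumes "a \<in> carrier G" "b \<in> carrier G" "c \<in> carrier G" "d \<in> carrier G"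
  shows "(a \<oplus> b) \<ominus> (c \<oplus> d) = (a \<ominus> c) \<oplus> (b \<ominus> d)"
  using assms by (simp add: a_minus_def minus_add a_ac)

lemma (in abelian_group) minus_eq_zero_iff:
  "x \<in> carrier G \<Longrightarrow> y \<in> carrier G \<Longrightarrow> x \<ominus> y = \<zero> \<longleftrightarrow> x = y"
proof
  assume xy: "x \<in> carrier G" "y \<in> carrier G" and e: "x \<ominus> y = \<zero>"
  have "x = (x \<ominus> y) \<oplus> y" using xy by (simp add: a_minus_def a_assoc l_neg)
  thus "x = y" using e xy by simp
next
  assume "x \<in> carrier G" "y \<in> carrier G" "x = y"
  thus "x \<ominus> y = \<zero>" by (simp add: a_minus_def r_neg)
qed

definition lin_span :: "('r, 'b) ring_scheme \<Rightarrow> ('r, 'm, 'c) module_scheme \<Rightarrow> 'm set \<Rightarrow> 'm set" where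
  "lin_span R M S = {x. \<exists>c. c \<in> S \<rightarrow> carrier R \<and> x = (\<Oplus>\<^bsub>M\<^esub>s\<in>S. c s \<odot>\<^bsub>M\<^esub> s)}"

lemma finsum_hom:
  assumes M: "abelian_group M" and N: "abelian_group N" and h: "h \<in> carrier M \<rightarrow> carrier N"
    and hadd: "\<And>x y. x \<in> carrier M \<Longrightarrow> y \<in> carrier M \<Longrightarrow> h (x \<oplus>\<^bsub>M\<^esub> y) = h x \<oplus>\<^bsub>N\<^esub> h y"
    and A: "finite A" and f: "f \<in> A \<rightarrow> carrier M"
  shows "h (finsum M f A) = finsum N (\<lambda>a. h (f a)) A"
proof -
  interpret M: abelian_group M by fact
  interpret N: abelian_group N by fact
  have z: "\<zero>\<^bsub>M\<^esub> \<in> carrier M" by simp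
  have "h \<zero>\<^bsub>M\<^esub> \<oplus>\<^bsub>N\<^esub> h \<zero>\<^bsub>M\<^esub> = \<zero>\<^bsub>N\<^esub> \<oplus>\<^bsub>N\<^esub> h \<zero>\<^bsub>M\<^esub>"
    using hadd[OF z z] z h by (auto simp: Pi_def)
  hence h0: "h \<zero>\<^bsub>M\<^esub> = \<zero>\<^bsub>N\<^esub>"
    using N.add.right_cancel[of "h \<zero>\<^bsub>M\<^esub>" "h \<zero>\<^bsub>M\<^esub>" "\<zero>\<^bsub>N\<^esub>"] z h by auto
  show ?thesis using A f
  proof (induction A rule: finite_induct)
    case empty
    then show ?case using h0 by simp
  next
    case (insert a A)
    have fa: "f a \<in> carrier M" "f \<in> A \<rightarrow> carrier M" using insert by auto
    have "finsum M f (insert a A) = f a \<oplus>\<^bsub>M\<^esub> finsum M f A"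
      using M.finsum_insert[OF insert(1,2) fa(2) fa(1)] .
    moreover have "finsum N (\<lambda>a. h (f a)) (insert a A) = h (f a) \<oplus>\<^bsub>N\<^esub> finsum N (\<lambda>a. h (f a)) A"
      using N.finsum_insert[OF insert(1,2), of "\<lambda>a. h (f a)"] fa h by (auto simp: Pi_def)
    moreover have "finsum M f A \<in> carrier M" using M.finsum_closed[OF fa(2)] .
    ultimately show ?case using insert hadd fa by simp
  qed
qed

context module begin

lemma finsum_cong_on:
  assumes "\<And>i. i \<in> A \<Longrightarrow> f i = g i" "g \<in> A \<rightarrow> carrier M"
  shows "finsum M f A = finsum M g A"
  using M.finsum_cong'[of A A g f] assms by auto

lemma lin_span_subset: "finite S \<Longrightarrow> S \<subseteq> carrier M \<Longrightarrow> lin_span R M S \<subseteq> carrier M"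
  unfolding lin_span_def by (auto intro!: M.finsum_closed)

lemma zero_in_lin_span: assumes "finite S" "S \<subseteq> carrier M" shows "\<zero>\<^bsub>M\<^esub> \<in> lin_span R M S"
proof -
  have "(\<Oplus>\<^bsub>M\<^esub>s\<in>S. \<zero> \<odot>\<^bsub>M\<^esub> s) = (\<Oplus>\<^bsub>M\<^esub>s\<in>S. \<zero>\<^bsub>M\<^esub>)"
    using assms by (intro finsum_cong_on) auto
  also have "\<dots> = \<zero>\<^bsub>M\<^esub>" by simp
  finally show ?thesis unfolding lin_span_def
    by (intro CollectI exI[of _ "\<lambda>_. \<zero>"]) auto
qed

lemma lin_span_add: assumes S: "finite S" "S \<subseteq> carrier M" and xy: "x \<in> lin_span R M S" "y \<in> lin_span R M S"
  shows "x \<oplus>\<^bsub>M\<^esub> y \<in> lin_span R M S"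
proof -
  obtain c d where c: "c \<in> S \<rightarrow> carrier R" "x = (\<Oplus>\<^bsub>M\<^esub>s\<in>S. c s \<odot>\<^bsub>M\<^esub> s)"
    and d: "d \<in> S \<rightarrow> carrier R" "y = (\<Oplus>\<^bsub>M\<^esub>s\<in>S. d s \<odot>\<^bsub>M\<^esub> s)"
    using xy unfolding lin_span_def by blast
  have "(\<Oplus>\<^bsub>M\<^esub>s\<in>S. (c s \<oplus> d s) \<odot>\<^bsub>M\<^esub> s) = (\<Oplus>\<^bsub>M\<^esub>s\<in>S. c s \<odot>\<^bsub>M\<^esub> s \<oplus>\<^bsub>M\<^esub> d s \<odot>\<^bsub>M\<^esub> s)"
    using S c d by (intro finsum_cong_on) (auto simp: smult_l_distr Pi_iff subsetD)
  also have "\<dots> = x \<oplus>\<^bsub>M\<^esub> y" using S c d by (subst M.finsum_addf) auto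
  finally show ?thesis unfolding lin_span_def using c d
    by (intro CollectI exI[of _ "\<lambda>s. c s \<oplus> d s"]) auto
qed

lemma lin_span_smult: assumes S: "finite S" "S \<subseteq> carrier M" and x: "x \<in> lin_span R M S" and a: "a \<in> carrier R"
  shows "a \<odot>\<^bsub>M\<^esub> x \<in> lin_span R M S"
proof -
  obtain c where c: "c \<in> S \<rightarrow> carrier R" "x = (\<Oplus>\<^bsub>M\<^esub>s\<in>S. c s \<odot>\<^bsub>M\<^esub> s)"
    using x unfolding lin_span_def by blast
  have "a \<odot>\<^bsub>M\<^esub> x = (\<Oplus>\<^bsub>M\<^esub>s\<in>S. a \<odot>\<^bsub>M\<^esub> (c s \<odot>\<^bsub>M\<^esub> s))"
    unfolding c(2) using S c a by (intro finsum_smult_ldistr) auto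
  also have "\<dots> = (\<Oplus>\<^bsub>M\<^esub>s\<in>S. (a \<otimes> c s) \<odot>\<^bsub>M\<^esub> s)"
    using S c a by (intro finsum_cong_on) (auto simp: smult_assoc1 Pi_iff subsetD)
  finally show ?thesis unfolding lin_span_def using c a
    by (intro CollectI exI[of _ "\<lambda>s. a \<otimes> c s"]) auto
qed

lemma lin_span_generator: assumes S: "finite S" "S \<subseteq> carrier M" and s: "s \<in> S"
  shows "s \<in> lin_span R M S"
proof -
  have "(\<Oplus>\<^bsub>M\<^esub>t\<in>S. (if t = s then \<one> else \<zero>) \<odot>\<^bsub>M\<^esub> t) = (\<Oplus>\<^bsub>M\<^esub>t\<in>S. if s = t then t else \<zero>\<^bsub>M\<^esub>)"
    using S by (intro finsum_cong_on) auto
  also have "\<dots> = s" using M.finsum_singleton[OF s S(1), of "\<lambda>t. t"] S by auto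
  finally show ?thesis unfolding lin_span_def
    by (intro CollectI exI[of _ "\<lambda>t. if t = s then \<one> else \<zero>"]) auto
qed

lemma lin_span_neg: assumes S: "finite S" "S \<subseteq> carrier M" and x: "x \<in> lin_span R M S"
  shows "\<ominus>\<^bsub>M\<^esub> x \<in> lin_span R M S"
proof -
  have "x \<in> carrier M" using lin_span_subset[OF S] x by blast
  hence "\<ominus>\<^bsub>M\<^esub> x = (\<ominus> \<one>) \<odot>\<^bsub>M\<^esub> x" using smult_l_minus[of \<one> x] by simp
  thus ?thesis using lin_span_smult[OF S x, of "\<ominus> \<one>"] by simp
qed

lemma lin_span_finsum: assumes S: "finite S" "S \<subseteq> carrier M" and A: "finite A" and f: "f \<in> A \<rightarrow> lin_span R M S"
  shows "finsum M f A \<in> lin_span R M S"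
  using A f
proof (induction A rule: finite_induct)
  case empty then show ?case using zero_in_lin_span[OF S] by simp
next
  case (insert a A)
  have fA: "f \<in> A \<rightarrow> carrier M" "f a \<in> carrier M" using insert lin_span_subset[OF S] by auto
  have "finsum M f (insert a A) = f a \<oplus>\<^bsub>M\<^esub> finsum M f A"
    using M.finsum_insert[OF insert(1,2) fA] .
  then show ?case using lin_span_add[OF S] insert by auto
qed

lemma lin_span_minimal:
  assumes S: "finite S" "S \<subseteq> T" and T: "T \<subseteq> carrier M" "\<zero>\<^bsub>M\<^esub> \<in> T"
    and Tadd: "\<And>x y. x \<in> T \<Longrightarrow> y \<in> T \<Longrightarrow> x \<oplus>\<^bsub>M\<^esub> y \<in> T"
    and Tsm: "\<And>a x. a \<in> carrier R \<Longrightarrow> x \<in> T \<Longrightarrow> a \<odot>\<^bsub>M\<^esub> x \<in> T"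
  shows "lin_span R M S \<subseteq> T"
proof
  fix x assume "x \<in> lin_span R M S"
  then obtain c where c: "c \<in> S \<rightarrow> carrier R" "x = (\<Oplus>\<^bsub>M\<^esub>s\<in>S. c s \<odot>\<^bsub>M\<^esub> s)"
    unfolding lin_span_def by blast
  have "\<And>A. finite A \<Longrightarrow> A \<subseteq> S \<Longrightarrow> (\<Oplus>\<^bsub>M\<^esub>s\<in>A. c s \<odot>\<^bsub>M\<^esub> s) \<in> T"
  proof -
    fix A assume "finite A" "A \<subseteq> S"
    thus "(\<Oplus>\<^bsub>M\<^esub>s\<in>A. c s \<odot>\<^bsub>M\<^esub> s) \<in> T"
    proof (induction A rule: finite_induct)
      case empty then show ?case using T by simp
    next
      case (insert a A)
      have "(\<Oplus>\<^bsub>M\<^esub>s\<in>insert a A. c s \<odot>\<^bsub>M\<^esub> s) = c a \<odot>\<^bsub>M\<^esub> a \<oplus>\<^bsub>M\<^esub> (\<Oplus>\<^bsub>M\<^esub>s\<in>A. c s \<odot>\<^bsub>M\<^esub> s)"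
        using insert c S T by (intro M.finsum_insert) (auto simp: Pi_iff subsetD)
      moreover have "c a \<odot>\<^bsub>M\<^esub> a \<in> T" using Tsm c insert S by (auto simp: Pi_iff)
      ultimately show ?case using insert Tadd by auto
    qed
  qed
  thus "x \<in> T" using c S by auto
qed

lemma lin_span_insert_decomp:
  assumes S: "finite S" "S \<subseteq> carrier M" and s: "s \<in> carrier M" "s \<notin> S"
    and x: "x \<in> lin_span R M (insert s S)"
  shows "\<exists>r y. r \<in> carrier R \<and> y \<in> lin_span R M S \<and> x = r \<odot>\<^bsub>M\<^esub> s \<oplus>\<^bsub>M\<^esub> y"
proof -
  obtain c where c: "c \<in> insert s S \<rightarrow> carrier R" "x = (\<Oplus>\<^bsub>M\<^esub>t\<in>insert s S. c t \<odot>\<^bsub>M\<^esub> t)"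
    using x unfolding lin_span_def by blast
  have "x = c s \<odot>\<^bsub>M\<^esub> s \<oplus>\<^bsub>M\<^esub> (\<Oplus>\<^bsub>M\<^esub>t\<in>S. c t \<odot>\<^bsub>M\<^esub> t)"
    unfolding c(2) using c S s by (intro M.finsum_insert) (auto simp: Pi_iff subsetD)
  moreover have "(\<Oplus>\<^bsub>M\<^esub>t\<in>S. c t \<odot>\<^bsub>M\<^esub> t) \<in> lin_span R M S" unfolding lin_span_def using c by auto
  ultimately show ?thesis using c by auto
qed

end

lemma carrier_subset_lin_span_iff: "carrier M \<subseteq> lin_span R M S \<longleftrightarrow>
   (\<forall>x\<in>carrier M. \<exists>c. c \<in> S \<rightarrow> carrier R \<and> x = (\<Oplus>\<^bsub>M\<^esub>s\<in>S. c s \<odot>\<^bsub>M\<^esub> s))"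
  unfolding lin_span_def by (simp add: subset_iff Ball_def)

lemma fin_gen_iff_lin_span: "fin_gen R M \<longleftrightarrow> (\<exists>S. finite S \<and> S \<subseteq> carrier M \<and> carrier M \<subseteq> lin_span R M S)"
  unfolding fin_gen_def carrier_subset_lin_span_iff by (rule refl)

section \<open>Representations and weak lifts\<close>

lemma is_rep_module: "is_rep G R M rho \<Longrightarrow> module R M" unfolding is_rep_def by blast

lemma is_rep_action_neg:
  assumes "is_rep G R M rho" "g \<in> carrier G" "x \<in> carrier M"
  shows "rho g (\<ominus>\<^bsub>M\<^esub> x) = \<ominus>\<^bsub>M\<^esub> rho g x"
proof -
  interpret module R M using is_rep_module[OF assms(1)] .
  have c: "rho g x \<in> carrier M" using assms unfolding is_rep_def by blast
  have "\<ominus>\<^bsub>M\<^esub> x = (\<ominus>\<^bsub>R\<^esub> \<one>\<^bsub>R\<^esub>) \<odot>\<^bsub>M\<^esub> x" using smult_l_minus[of "\<one>\<^bsub>R\<^esub>" x] assms by simp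
  hence "rho g (\<ominus>\<^bsub>M\<^esub> x) = (\<ominus>\<^bsub>R\<^esub> \<one>\<^bsub>R\<^esub>) \<odot>\<^bsub>M\<^esub> rho g x"
    using assms unfolding is_rep_def by simp
  also have "\<dots> = \<ominus>\<^bsub>M\<^esub> rho g x" using smult_l_minus[of "\<one>\<^bsub>R\<^esub>" "rho g x"] c by simp
  finally show ?thesis .
qed

lemma is_rep_action_zero:
  assumes "is_rep G R M rho" "g \<in> carrier G"
  shows "rho g \<zero>\<^bsub>M\<^esub> = \<zero>\<^bsub>M\<^esub>"
proof -
  interpret module R M using is_rep_module[OF assms(1)] .
  have c: "rho g \<zero>\<^bsub>M\<^esub> \<in> carrier M" using assms unfolding is_rep_def by simp
  have "rho g (\<zero>\<^bsub>R\<^esub> \<odot>\<^bsub>M\<^esub> \<zero>\<^bsub>M\<^esub>) = \<zero>\<^bsub>R\<^esub> \<odot>\<^bsub>M\<^esub> rho g \<zero>\<^bsub>M\<^esub>"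
    using assms R.zero_closed M.zero_closed unfolding is_rep_def by blast
  thus ?thesis using c by simp
qed

lemma rep_hom_zero:
  assumes "module R A" "module R B" "rep_hom G R A a B b f"
  shows "f \<zero>\<^bsub>A\<^esub> = \<zero>\<^bsub>B\<^esub>"
proof -
  interpret A: module R A by fact
  interpret B: module R B by fact
  have "f (\<zero>\<^bsub>R\<^esub> \<odot>\<^bsub>A\<^esub> \<zero>\<^bsub>A\<^esub>) = \<zero>\<^bsub>R\<^esub> \<odot>\<^bsub>B\<^esub> f \<zero>\<^bsub>A\<^esub>"
    using assms(3) unfolding rep_hom_def by blast
  moreover have "f \<zero>\<^bsub>A\<^esub> \<in> carrier B" using assms(3) unfolding rep_hom_def by blast
  ultimately show ?thesis by simp
qed

lemma rep_hom_comp: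
  assumes "rep_hom G R A a B b f" and "rep_hom G R B b C c g"
  shows "rep_hom G R A a C c (\<lambda>x. g (f x))"
  using assms unfolding rep_hom_def by (auto simp: Pi_iff)

lemma is_weak_lift_comp:
  assumes L: "is_weak_lift G R V rho L lam f" and g: "rep_hom G R V rho W sig g"
    and gs: "g ` carrier V = carrier W"
  shows "is_weak_lift G R W sig L lam (\<lambda>x. g (f x))"
proof -
  have L1: "in_Rep_free G R L lam" "rep_hom G R L lam V rho f" "f ` carrier L = carrier V"
    using L unfolding is_weak_lift_def by blast+
  have "(\<lambda>x. g (f x)) ` carrier L = g ` (f ` carrier L)" by (simp add: image_image)
  also have "\<dots> = carrier W" using L1(3) gs by simp
  finally have "(\<lambda>x. g (f x)) ` carrier L = carrier W" .
  thus ?thesis unfolding is_weak_lift_def using L1(1) rep_hom_comp[OF L1(2) g] by blast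
qed

lemma has_weak_lift_comp:
  fixes R :: "'r ring"
  assumes "has_weak_lift G R V rho" "rep_hom G R V rho W sig g" "g ` carrier V = carrier W"
  shows "has_weak_lift G R W sig"
proof -
  obtain L :: "('r, nat \<Rightarrow> 'r) module" and lam f where "is_weak_lift G R V rho L lam f"
    using assms(1) unfolding has_weak_lift_def by blast
  hence "is_weak_lift G R W sig L lam (\<lambda>x. g (f x))" using is_weak_lift_comp assms(2,3) by blast
  thus ?thesis unfolding has_weak_lift_def by blast
qed

section \<open>Quotients and copies of representations\<close>

text \<open>If q is constant exactly on the cosets of a subrepresentation N (locale quotient_map), the
  operations induced on the image of q realise M/N; repr chooses a preimage. The fields mult and
  one are dummies.\<close>
definition repr :: "('r,'m) module \<Rightarrow> ('m \<Rightarrow> 'n) \<Rightarrow> 'n \<Rightarrow> 'm" where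
  "repr M q u = (SOME x. x \<in> carrier M \<and> q x = u)"

definition quotient_module :: "('r,'m) module \<Rightarrow> ('m \<Rightarrow> 'n) \<Rightarrow> ('r,'n) module" where
  "quotient_module M q = \<lparr>carrier = q ` carrier M, monoid.mult = (\<lambda>u v. u), one = q \<zero>\<^bsub>M\<^esub>, ring.zero = q \<zero>\<^bsub>M\<^esub>,
     ring.add = (\<lambda>u v. q (repr M q u \<oplus>\<^bsub>M\<^esub> repr M q v)), smult = (\<lambda>a u. q (a \<odot>\<^bsub>M\<^esub> repr M q u))\<rparr>"

definition quotient_action :: "('r,'m) module \<Rightarrow> ('m \<Rightarrow> 'n) \<Rightarrow> ('g \<Rightarrow> 'm \<Rightarrow> 'm) \<Rightarrow> 'g \<Rightarrow> 'n \<Rightarrow> 'n" where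
  "quotient_action M q rho = (\<lambda>g u. q (rho g (repr M q u)))"

lemma quotient_module_simps[simp]:
  "carrier (quotient_module M q) = q ` carrier M"
  "ring.zero (quotient_module M q) = q \<zero>\<^bsub>M\<^esub>"
  unfolding quotient_module_def by simp_all

lemma quotient_module_ops:
  "ring.add (quotient_module M q) u v = q (repr M q u \<oplus>\<^bsub>M\<^esub> repr M q v)"
  "smult (quotient_module M q) a u = q (a \<odot>\<^bsub>M\<^esub> repr M q u)"
  unfolding quotient_module_def by simp_all

locale quotient_map =
  fixes G :: "'g monoid" and R :: "'r ring" and M :: "('r,'m) module" and rho :: "'g \<Rightarrow> 'm \<Rightarrow> 'm"
    and N :: "'m set" and q :: "'m \<Rightarrow> 'n"
  assumes rep: "is_rep G R M rho"
    and N_sub: "N \<subseteq> carrier M" and N_zero: "\<zero>\<^bsub>M\<^esub> \<in> N"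
    and N_add: "\<And>x y. x \<in> N \<Longrightarrow> y \<in> N \<Longrightarrow> x \<oplus>\<^bsub>M\<^esub> y \<in> N"
    and N_smult: "\<And>a x. a \<in> carrier R \<Longrightarrow> x \<in> N \<Longrightarrow> a \<odot>\<^bsub>M\<^esub> x \<in> N"
    and N_rho: "\<And>g x. g \<in> carrier G \<Longrightarrow> x \<in> N \<Longrightarrow> rho g x \<in> N"
    and q_eq: "\<And>x y. x \<in> carrier M \<Longrightarrow> y \<in> carrier M \<Longrightarrow> q x = q y \<longleftrightarrow> x \<ominus>\<^bsub>M\<^esub> y \<in> N"

sublocale quotient_map \<subseteq> module R M using is_rep_module[OF rep] .

context quotient_map begin

lemma rho_closed: "g \<in> carrier G \<Longrightarrow> x \<in> carrier M \<Longrightarrow> rho g x \<in> carrier M"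
  using rep unfolding is_rep_def by blast
lemma rho_add: "g \<in> carrier G \<Longrightarrow> x \<in> carrier M \<Longrightarrow> y \<in> carrier M \<Longrightarrow>
   rho g (x \<oplus>\<^bsub>M\<^esub> y) = rho g x \<oplus>\<^bsub>M\<^esub> rho g y"
  using rep unfolding is_rep_def by blast
lemma rho_smult: "g \<in> carrier G \<Longrightarrow> a \<in> carrier R \<Longrightarrow> x \<in> carrier M \<Longrightarrow>
   rho g (a \<odot>\<^bsub>M\<^esub> x) = a \<odot>\<^bsub>M\<^esub> rho g x"
  using rep unfolding is_rep_def by blast
lemma rho_one: "x \<in> carrier M \<Longrightarrow> rho \<one>\<^bsub>G\<^esub> x = x"
  using rep unfolding is_rep_def by blast
lemma rho_mult: "g \<in> carrier G \<Longrightarrow> h \<in> carrier G \<Longrightarrow> x \<in> carrier M \<Longrightarrow>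
   rho (g \<otimes>\<^bsub>G\<^esub> h) x = rho g (rho h x)"
  using rep unfolding is_rep_def by blast
lemma group_G: "group G" using rep unfolding is_rep_def by blast

lemma repr_image: assumes "x \<in> carrier M"
  shows "repr M q (q x) \<in> carrier M" "q (repr M q (q x)) = q x"
proof -
  have "\<exists>y. y \<in> carrier M \<and> q y = q x" using assms by blast
  hence "repr M q (q x) \<in> carrier M \<and> q (repr M q (q x)) = q x"
    unfolding repr_def by (rule someI_ex)
  thus "repr M q (q x) \<in> carrier M" "q (repr M q (q x)) = q x" by auto
qed

lemma repr_minus_in_N: "x \<in> carrier M \<Longrightarrow> repr M q (q x) \<ominus>\<^bsub>M\<^esub> x \<in> N"
  using repr_image q_eq by blast

lemma q_add: assumes "x \<in> carrier M" "y \<in> carrier M"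
  shows "add (quotient_module M q) (q x) (q y) = q (x \<oplus>\<^bsub>M\<^esub> y)"
proof -
  have "(repr M q (q x) \<oplus>\<^bsub>M\<^esub> repr M q (q y)) \<ominus>\<^bsub>M\<^esub> (x \<oplus>\<^bsub>M\<^esub> y)
     = (repr M q (q x) \<ominus>\<^bsub>M\<^esub> x) \<oplus>\<^bsub>M\<^esub> (repr M q (q y) \<ominus>\<^bsub>M\<^esub> y)"
    using assms repr_image by (intro M.add_minus_add) auto
  also have "\<dots> \<in> N" using repr_minus_in_N assms N_add by auto
  finally show ?thesis using q_eq assms repr_image by (simp add: quotient_module_ops)
qed

lemma q_smult: assumes "a \<in> carrier R" "x \<in> carrier M"
  shows "smult (quotient_module M q) a (q x) = q (a \<odot>\<^bsub>M\<^esub> x)"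
proof -
  have "a \<odot>\<^bsub>M\<^esub> repr M q (q x) \<ominus>\<^bsub>M\<^esub> a \<odot>\<^bsub>M\<^esub> x = a \<odot>\<^bsub>M\<^esub> (repr M q (q x) \<ominus>\<^bsub>M\<^esub> x)"
    using assms repr_image by (simp add: a_minus_def smult_r_distr smult_r_minus)
  also have "\<dots> \<in> N" using repr_minus_in_N assms N_smult by auto
  finally show ?thesis using q_eq assms repr_image by (simp add: quotient_module_ops)
qed

lemma q_action: assumes "g \<in> carrier G" "x \<in> carrier M"
  shows "quotient_action M q rho g (q x) = q (rho g x)"
proof -
  have "rho g (repr M q (q x)) \<ominus>\<^bsub>M\<^esub> rho g x = rho g (repr M q (q x) \<ominus>\<^bsub>M\<^esub> x)"
    using assms repr_image rho_add is_rep_action_neg[OF rep] by (simp add: a_minus_def)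
  also have "\<dots> \<in> N" using repr_minus_in_N assms N_rho by auto
  finally show ?thesis using q_eq assms repr_image rho_closed unfolding quotient_action_def by simp
qed

lemma q_zero_iff: "x \<in> carrier M \<Longrightarrow> q x = \<zero>\<^bsub>quotient_module M q\<^esub> \<longleftrightarrow> x \<in> N"
proof -
  have z: "\<ominus>\<^bsub>M\<^esub> \<zero>\<^bsub>M\<^esub> = \<zero>\<^bsub>M\<^esub>" using M.l_neg[of "\<zero>\<^bsub>M\<^esub>"] M.r_zero[of "\<ominus>\<^bsub>M\<^esub> \<zero>\<^bsub>M\<^esub>"] by simp
  assume "x \<in> carrier M"
  thus ?thesis using q_eq[of x "\<zero>\<^bsub>M\<^esub>"] z by (simp add: a_minus_def)
qed

lemma module_quotient: "module R (quotient_module M q)"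
proof (rule moduleI)
  show "cring R" by (rule is_cring)
  show "abelian_group (quotient_module M q)"
  proof (rule abelian_groupI)
    show "\<zero>\<^bsub>quotient_module M q\<^esub> \<in> carrier (quotient_module M q)" by simp
  next
    fix u assume "u \<in> carrier (quotient_module M q)"
    then obtain x where x: "x \<in> carrier M" "u = q x" by auto
    thus "\<exists>y\<in>carrier (quotient_module M q). y \<oplus>\<^bsub>quotient_module M q\<^esub> u = \<zero>\<^bsub>quotient_module M q\<^esub>"
      using q_add[of "\<ominus>\<^bsub>M\<^esub> x" x] by (intro bexI[of _ "q (\<ominus>\<^bsub>M\<^esub> x)"]) (auto simp: M.l_neg)
  qed (auto simp: q_add M.a_ac intro!: imageI)
qed (auto simp: q_add q_smult smult_l_distr smult_r_distr smult_assoc1)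

lemma is_rep_quotient: "is_rep G R (quotient_module M q) (quotient_action M q rho)"
  unfolding is_rep_def quotient_module_simps ball_simps(9)
proof (intro conjI ballI)
  show "group G" by (rule group_G)
  show "module R (quotient_module M q)" by (rule module_quotient)
  fix g assume g: "g \<in> carrier G"
  { fix x assume x: "x \<in> carrier M"
    show "quotient_action M q rho g (q x) \<in> q ` carrier M" using g x by (simp add: q_action rho_closed)
    fix y assume y: "y \<in> carrier M"
    show "quotient_action M q rho g (q x \<oplus>\<^bsub>quotient_module M q\<^esub> q y) =
          quotient_action M q rho g (q x) \<oplus>\<^bsub>quotient_module M q\<^esub> quotient_action M q rho g (q y)"
      using g x y by (simp add: q_add q_action rho_closed rho_add)
  }
  { fix a x assume a: "a \<in> carrier R" and x: "x \<in> carrier M"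
    show "quotient_action M q rho g (a \<odot>\<^bsub>quotient_module M q\<^esub> q x) = a \<odot>\<^bsub>quotient_module M q\<^esub> quotient_action M q rho g (q x)"
      using g x a by (simp add: q_smult q_action rho_closed rho_smult)
  }
  { fix h x assume h: "h \<in> carrier G" and x: "x \<in> carrier M"
    show "quotient_action M q rho (g \<otimes>\<^bsub>G\<^esub> h) (q x) = quotient_action M q rho g (quotient_action M q rho h (q x))"
      using g h x group_G by (simp add: q_action rho_closed rho_mult group.subgroup_self subgroup.m_closed)
  }
next
  fix x assume x: "x \<in> carrier M"
  show "quotient_action M q rho \<one>\<^bsub>G\<^esub> (q x) = q x"
    using x group_G by (simp add: q_action rho_one group.is_monoid monoid.one_closed)
qed

lemma rep_hom_q: "rep_hom G R M rho (quotient_module M q) (quotient_action M q rho) q"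
  unfolding rep_hom_def by (simp add: q_add q_action q_smult)

lemma fin_gen_quotient:
  assumes "fin_gen R M" shows "fin_gen R (quotient_module M q)"
proof -
  interpret P: module R "quotient_module M q" by (rule module_quotient)
  obtain S where S: "finite S" "S \<subseteq> carrier M" "carrier M \<subseteq> lin_span R M S"
    using fin_gen_iff_lin_span[THEN iffD1, OF assms] by blast
  have qS: "finite (q ` S)" "q ` S \<subseteq> carrier (quotient_module M q)" using S by auto
  have "carrier (quotient_module M q) \<subseteq> lin_span R (quotient_module M q) (q ` S)"
  proof
    fix u assume "u \<in> carrier (quotient_module M q)"
    then obtain x where x: "x \<in> carrier M" "u = q x" by auto
    then obtain c where c: "c \<in> S \<rightarrow> carrier R" "x = (\<Oplus>\<^bsub>M\<^esub>s\<in>S. c s \<odot>\<^bsub>M\<^esub> s)"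
      using S unfolding lin_span_def by blast
    have sc: "\<And>s. s \<in> S \<Longrightarrow> s \<in> carrier M" "\<And>s. s \<in> S \<Longrightarrow> c s \<in> carrier R"
      using S c by auto
    have tc: "(\<lambda>s. c s \<odot>\<^bsub>M\<^esub> s) \<in> S \<rightarrow> carrier M" using sc by simp
    have qc: "q \<in> carrier M \<rightarrow> carrier (quotient_module M q)" by simp
    have "q x = (\<Oplus>\<^bsub>quotient_module M q\<^esub>s\<in>S. q (c s \<odot>\<^bsub>M\<^esub> s))"
      unfolding c(2)
      by (rule finsum_hom[OF M.abelian_group_axioms P.abelian_group_axioms qc q_add[symmetric] S(1) tc])
    also have "\<dots> = (\<Oplus>\<^bsub>quotient_module M q\<^esub>s\<in>S. c s \<odot>\<^bsub>quotient_module M q\<^esub> q s)"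
      using sc by (intro P.finsum_cong_on) (simp_all add: q_smult)
    also have "\<dots> \<in> lin_span R (quotient_module M q) (q ` S)"
    proof (rule P.lin_span_finsum[OF qS S(1)])
      show "(\<lambda>s. c s \<odot>\<^bsub>quotient_module M q\<^esub> q s) \<in> S \<rightarrow> lin_span R (quotient_module M q) (q ` S)"
        using P.lin_span_smult[OF qS P.lin_span_generator[OF qS]] sc by simp
    qed
    finally show "u \<in> lin_span R (quotient_module M q) (q ` S)" using x by simp
  qed
  thus ?thesis using qS by (intro fin_gen_iff_lin_span[THEN iffD2] exI[of _ "q ` S"] conjI)
qed

lemma in_Rep_quotient: "in_Rep G R M rho \<Longrightarrow> in_Rep G R (quotient_module M q) (quotient_action M q rho)"
  unfolding in_Rep_def using is_rep_quotient fin_gen_quotient by blast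

lemma quotient_smult_zero:
  assumes a: "a \<in> carrier R" and aN: "\<And>x. x \<in> carrier M \<Longrightarrow> a \<odot>\<^bsub>M\<^esub> x \<in> N"
  shows "\<forall>u\<in>carrier (quotient_module M q). a \<odot>\<^bsub>quotient_module M q\<^esub> u = \<zero>\<^bsub>quotient_module M q\<^esub>"
  using q_smult[OF a] q_zero_iff aN a by auto

end

locale rep_copy = quotient_map G R M rho "{\<zero>\<^bsub>M\<^esub>}" q
  for G :: "'g monoid" and R :: "'r ring" and M :: "('r,'m) module" and rho and q :: "'m \<Rightarrow> 'n"

context rep_copy begin

lemma q_inj: assumes "x \<in> carrier M" "y \<in> carrier M" "q x = q y" shows "x = y"
proof -
  have "x \<ominus>\<^bsub>M\<^esub> y = \<zero>\<^bsub>M\<^esub>" using q_eq assms by blast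
  hence "x \<ominus>\<^bsub>M\<^esub> y \<oplus>\<^bsub>M\<^esub> y = y" using assms by simp
  thus ?thesis using assms by (simp add: a_minus_def M.a_assoc M.l_neg)
qed

lemma repr_q: "x \<in> carrier M \<Longrightarrow> repr M q (q x) = x"
  using repr_image q_inj by blast

lemma rep_hom_repr: "rep_hom G R (quotient_module M q) (quotient_action M q rho) M rho (repr M q)"
  unfolding rep_hom_def
  by (auto simp: q_add q_action q_smult repr_q rho_closed repr_image)

lemma repr_surj: "repr M q ` carrier (quotient_module M q) = carrier M"
proof
  show "repr M q ` carrier (quotient_module M q) \<subseteq> carrier M" using repr_image by auto
  show "carrier M \<subseteq> repr M q ` carrier (quotient_module M q)"
  proof
    fix x assume "x \<in> carrier M"
    thus "x \<in> repr M q ` carrier (quotient_module M q)" using repr_q[of x] by (auto intro!: image_eqI[of x _ "q x"])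
  qed
qed

lemma has_weak_lift_from_copy: "has_weak_lift G R (quotient_module M q) (quotient_action M q rho) \<Longrightarrow> has_weak_lift G R M rho"
  using has_weak_lift_comp rep_hom_repr repr_surj by blast

end

text \<open>Given generators s 0, ..., s (m-1), the coset x + N is encoded by the set of coefficient
  vectors whose combination lies in x + N. This realises quotients (and, for N = {0}, copies) of
  finitely generated representations on the carrier type (nat \<Rightarrow> 'r) set, the only one the
  hypothesis of the theorem is about.\<close>
definition lin_comb :: "('r,'m) module \<Rightarrow> nat \<Rightarrow> (nat \<Rightarrow> 'm) \<Rightarrow> (nat \<Rightarrow> 'r) \<Rightarrow> 'm" where
  "lin_comb M m s c = (\<Oplus>\<^bsub>M\<^esub> i\<in>{..<m}. c i \<odot>\<^bsub>M\<^esub> s i)"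

definition coeff_fiber :: "'r ring \<Rightarrow> ('r,'m) module \<Rightarrow> nat \<Rightarrow> (nat \<Rightarrow> 'm) \<Rightarrow> 'm set \<Rightarrow> 'm \<Rightarrow> (nat \<Rightarrow> 'r) set" where
  "coeff_fiber R M m s N x = {c. (\<forall>i. c i \<in> carrier R) \<and> lin_comb M m s c \<ominus>\<^bsub>M\<^esub> x \<in> N}"

lemma fin_gen_indexed:
  assumes mod: "module R M" and fg: "fin_gen R M"
  shows "\<exists>m s. s \<in> {..<m} \<rightarrow> carrier M \<and>
     (\<forall>x\<in>carrier M. \<exists>c. (\<forall>i. c i \<in> carrier R) \<and> x = lin_comb M m s c)"
proof -
  interpret module R M by fact
  obtain S where S: "finite S" "S \<subseteq> carrier M" "carrier M \<subseteq> lin_span R M S"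
    using fin_gen_iff_lin_span[THEN iffD1, OF fg] by blast
  obtain h where h: "bij_betw h {0..<card S} S" using ex_bij_betw_nat_finite[OF S(1)] by blast
  define m where "m = card S"
  have hS: "h ` {..<m} = S" "inj_on h {..<m}" using h unfolding m_def bij_betw_def
    by (auto simp: atLeast0LessThan)
  have hc: "h \<in> {..<m} \<rightarrow> carrier M" using hS S by auto
  have "\<forall>x\<in>carrier M. \<exists>c. (\<forall>i. c i \<in> carrier R) \<and> x = lin_comb M m h c"
  proof
    fix x assume "x \<in> carrier M"
    then obtain c0 where c0: "c0 \<in> S \<rightarrow> carrier R" "x = (\<Oplus>\<^bsub>M\<^esub>t\<in>S. c0 t \<odot>\<^bsub>M\<^esub> t)"
      using S unfolding lin_span_def by blast
    define c where "c i = (if i < m then c0 (h i) else \<zero>\<^bsub>R\<^esub>)" for i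
    have cc: "\<forall>i. c i \<in> carrier R" unfolding c_def using c0 hS by auto
    have tc: "(\<lambda>t. c0 t \<odot>\<^bsub>M\<^esub> t) \<in> h ` {..<m} \<rightarrow> carrier M" using c0 hS S by auto
    have "x = (\<Oplus>\<^bsub>M\<^esub>i\<in>{..<m}. c0 (h i) \<odot>\<^bsub>M\<^esub> h i)"
      unfolding c0(2) using M.finsum_reindex[OF tc hS(2)] hS(1) by simp
    also have "\<dots> = lin_comb M m h c"
      unfolding lin_comb_def using cc hc by (intro finsum_cong_on) (auto simp: c_def)
    finally show "\<exists>c. (\<forall>i. c i \<in> carrier R) \<and> x = lin_comb M m h c" using cc by blast
  qed
  thus ?thesis using hc by blast
qed

lemma lin_comb_closed:
  assumes "module R M" "s \<in> {..<m} \<rightarrow> carrier M" "\<forall>i. c i \<in> carrier R"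
  shows "lin_comb M m s c \<in> carrier M"
proof -
  interpret module R M by fact
  show ?thesis unfolding lin_comb_def using assms by (intro M.finsum_closed) auto
qed

lemma coeff_fiber_eq_iff:
  assumes mod: "module R M" and s: "s \<in> {..<m} \<rightarrow> carrier M"
    and surj: "\<forall>x\<in>carrier M. \<exists>c. (\<forall>i. c i \<in> carrier R) \<and> x = lin_comb M m s c"
    and N: "N \<subseteq> carrier M" "\<zero>\<^bsub>M\<^esub> \<in> N" "\<And>x y. x \<in> N \<Longrightarrow> y \<in> N \<Longrightarrow> x \<oplus>\<^bsub>M\<^esub> y \<in> N"
      "\<And>x. x \<in> N \<Longrightarrow> \<ominus>\<^bsub>M\<^esub> x \<in> N"
    and xy: "x \<in> carrier M" "y \<in> carrier M"
  shows "coeff_fiber R M m s N x = coeff_fiber R M m s N y \<longleftrightarrow> x \<ominus>\<^bsub>M\<^esub> y \<in> N"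
proof -
  interpret module R M by fact
  have tri: "\<And>a b d. a \<in> carrier M \<Longrightarrow> b \<in> carrier M \<Longrightarrow> d \<in> carrier M \<Longrightarrow>
      (a \<ominus>\<^bsub>M\<^esub> b) \<oplus>\<^bsub>M\<^esub> (b \<ominus>\<^bsub>M\<^esub> d) = a \<ominus>\<^bsub>M\<^esub> d"
    by (simp add: a_minus_def M.a_assoc[symmetric]) (simp add: M.a_assoc M.l_neg)
  have neg: "\<ominus>\<^bsub>M\<^esub> (x \<ominus>\<^bsub>M\<^esub> y) = y \<ominus>\<^bsub>M\<^esub> x"
    using xy by (simp add: a_minus_def M.minus_add M.minus_minus M.a_comm)
  show ?thesis
  proof
    assume eq: "coeff_fiber R M m s N x = coeff_fiber R M m s N y"
    obtain c where c: "\<forall>i. c i \<in> carrier R" "x = lin_comb M m s c" using surj xy by blast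
    have "c \<in> coeff_fiber R M m s N x" unfolding coeff_fiber_def using c N xy by (simp add: M.r_neg a_minus_def)
    hence "c \<in> coeff_fiber R M m s N y" using eq by simp
    thus "x \<ominus>\<^bsub>M\<^esub> y \<in> N" unfolding coeff_fiber_def using c by simp
  next
    assume d: "x \<ominus>\<^bsub>M\<^esub> y \<in> N"
    have d': "y \<ominus>\<^bsub>M\<^esub> x \<in> N" using N(4)[OF d] neg by simp
    show "coeff_fiber R M m s N x = coeff_fiber R M m s N y"
    proof (intro subset_antisym subsetI)
      fix c assume "c \<in> coeff_fiber R M m s N x"
      hence c: "\<forall>i. c i \<in> carrier R" "lin_comb M m s c \<ominus>\<^bsub>M\<^esub> x \<in> N" unfolding coeff_fiber_def by auto
      have lc: "lin_comb M m s c \<in> carrier M" using lin_comb_closed[OF mod s c(1)] .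
      have "lin_comb M m s c \<ominus>\<^bsub>M\<^esub> y = (lin_comb M m s c \<ominus>\<^bsub>M\<^esub> x) \<oplus>\<^bsub>M\<^esub> (x \<ominus>\<^bsub>M\<^esub> y)"
        using tri[OF lc xy] by simp
      also have "\<dots> \<in> N" using N(3) c(2) d by blast
      finally show "c \<in> coeff_fiber R M m s N y" unfolding coeff_fiber_def using c by simp
    next
      fix c assume "c \<in> coeff_fiber R M m s N y"
      hence c: "\<forall>i. c i \<in> carrier R" "lin_comb M m s c \<ominus>\<^bsub>M\<^esub> y \<in> N" unfolding coeff_fiber_def by auto
      have lc: "lin_comb M m s c \<in> carrier M" using lin_comb_closed[OF mod s c(1)] .
      have "lin_comb M m s c \<ominus>\<^bsub>M\<^esub> x = (lin_comb M m s c \<ominus>\<^bsub>M\<^esub> y) \<oplus>\<^bsub>M\<^esub> (y \<ominus>\<^bsub>M\<^esub> x)"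
        using tri[OF lc xy(2) xy(1)] by simp
      also have "\<dots> \<in> N" using N(3) c(2) d' by blast
      finally show "c \<in> coeff_fiber R M m s N x" unfolding coeff_fiber_def using c by simp
    qed
  qed
qed

lemma ex_quotient_map:
  fixes R :: "'r ring" and M :: "('r,'m) module"
  assumes M: "in_Rep G R M rho"
    and N: "N \<subseteq> carrier M" "\<zero>\<^bsub>M\<^esub> \<in> N" "\<And>x y. x \<in> N \<Longrightarrow> y \<in> N \<Longrightarrow> x \<oplus>\<^bsub>M\<^esub> y \<in> N"
      "\<And>a x. a \<in> carrier R \<Longrightarrow> x \<in> N \<Longrightarrow> a \<odot>\<^bsub>M\<^esub> x \<in> N"
      "\<And>g x. g \<in> carrier G \<Longrightarrow> x \<in> N \<Longrightarrow> rho g x \<in> N"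
  shows "\<exists>q :: 'm \<Rightarrow> (nat \<Rightarrow> 'r) set. quotient_map G R M rho N q"
proof -
  have rep: "is_rep G R M rho" and fg: "fin_gen R M" using M unfolding in_Rep_def by blast+
  have mod: "module R M" using is_rep_module[OF rep] .
  interpret module R M by fact
  obtain m s where s: "s \<in> {..<m} \<rightarrow> carrier M"
    and surj: "\<forall>x\<in>carrier M. \<exists>c. (\<forall>i. c i \<in> carrier R) \<and> x = lin_comb M m s c"
    using fin_gen_indexed[OF mod fg] by blast
  have neg: "\<ominus>\<^bsub>M\<^esub> x \<in> N" if "x \<in> N" for x
    using N(4)[of "\<ominus>\<^bsub>R\<^esub> \<one>\<^bsub>R\<^esub>" x] N(1) smult_l_minus[of "\<one>\<^bsub>R\<^esub>" x] that by auto
  have "quotient_map G R M rho N (coeff_fiber R M m s N)"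
    unfolding quotient_map_def using rep N coeff_fiber_eq_iff[OF mod s surj N(1-3) neg] by blast
  thus ?thesis by blast
qed

lemma ex_rep_copy:
  fixes R :: "'r ring" and M :: "('r,'m) module"
  assumes M: "in_Rep G R M rho"
  shows "\<exists>q :: 'm \<Rightarrow> (nat \<Rightarrow> 'r) set. rep_copy G R M rho q"
proof -
  have rep: "is_rep G R M rho" using M unfolding in_Rep_def by blast
  interpret module R M using is_rep_module[OF rep] .
  show ?thesis unfolding rep_copy_def
    by (rule ex_quotient_map[OF M]) (auto simp: is_rep_action_zero[OF rep])
qed

lemma ex_quotient_map_p_multiples:
  fixes R :: "'r ring" and M :: "('r,'m) module"
  assumes M: "in_Rep G R M rho" and p: "p \<in> carrier R"
  shows "\<exists>q :: 'm \<Rightarrow> (nat \<Rightarrow> 'r) set. quotient_map G R M rho ((\<lambda>x. p \<odot>\<^bsub>M\<^esub> x) ` carrier M) q"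
proof (rule ex_quotient_map[OF M])
  have rep: "is_rep G R M rho" using M unfolding in_Rep_def by blast
  interpret module R M using is_rep_module[OF rep] .
  let ?N = "(\<lambda>x. p \<odot>\<^bsub>M\<^esub> x) ` carrier M"
  show "?N \<subseteq> carrier M" using p by auto
  show "\<zero>\<^bsub>M\<^esub> \<in> ?N" using p by (intro image_eqI[of _ _ "\<zero>\<^bsub>M\<^esub>"]) auto
  show "x \<oplus>\<^bsub>M\<^esub> y \<in> ?N" if "x \<in> ?N" "y \<in> ?N" for x y
    using that p by (auto simp: smult_r_distr[symmetric])
  show "a \<odot>\<^bsub>M\<^esub> x \<in> ?N" if a: "a \<in> carrier R" and x: "x \<in> ?N" for a x
  proof -
    obtain y where y: "y \<in> carrier M" "x = p \<odot>\<^bsub>M\<^esub> y" using x by auto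
    have "a \<odot>\<^bsub>M\<^esub> x = p \<odot>\<^bsub>M\<^esub> (a \<odot>\<^bsub>M\<^esub> y)"
      using y a p by (simp add: smult_assoc1[symmetric] R.m_comm)
    thus ?thesis using y a by auto
  qed
  show "rho g x \<in> ?N" if g: "g \<in> carrier G" and x: "x \<in> ?N" for g x
  proof -
    obtain y where y: "y \<in> carrier M" "x = p \<odot>\<^bsub>M\<^esub> y" using x by auto
    have "rho g x = p \<odot>\<^bsub>M\<^esub> rho g y" and "rho g y \<in> carrier M"
      using y g p rep unfolding is_rep_def by simp_all
    thus ?thesis by auto
  qed
qed

section \<open>Torsion-free modules are free\<close>

lemma fin_free_torsion_free:
  assumes mod: "module R M" and dom: "domain R" and ff: "fin_free R M"
    and a: "a \<in> carrier R" "a \<noteq> \<zero>\<^bsub>R\<^esub>" and x: "x \<in> carrier M" and ax: "a \<odot>\<^bsub>M\<^esub> x = \<zero>\<^bsub>M\<^esub>"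
  shows "x = \<zero>\<^bsub>M\<^esub>"
proof -
  interpret module R M by fact
  interpret D: domain R by fact
  obtain B where B: "finite B" "B \<subseteq> carrier M"
    and uq: "\<forall>x\<in>carrier M. \<exists>!c. c \<in> B \<rightarrow>\<^sub>E carrier R \<and> x = (\<Oplus>\<^bsub>M\<^esub>b\<in>B. c b \<odot>\<^bsub>M\<^esub> b)"
    using ff unfolding fin_free_def by blast
  obtain c where c: "c \<in> B \<rightarrow>\<^sub>E carrier R" "x = (\<Oplus>\<^bsub>M\<^esub>b\<in>B. c b \<odot>\<^bsub>M\<^esub> b)" using uq x by blast
  have bc: "\<And>b. b \<in> B \<Longrightarrow> b \<in> carrier M" "\<And>b. b \<in> B \<Longrightarrow> c b \<in> carrier R" using B c by auto
  define c1 where "c1 = (\<lambda>b\<in>B. a \<otimes>\<^bsub>R\<^esub> c b)"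
  define c2 where "c2 = (\<lambda>b\<in>B. \<zero>\<^bsub>R\<^esub>)"
  have c1E: "c1 \<in> B \<rightarrow>\<^sub>E carrier R" unfolding c1_def using bc a by auto
  have c2E: "c2 \<in> B \<rightarrow>\<^sub>E carrier R" unfolding c2_def by auto
  have "a \<odot>\<^bsub>M\<^esub> x = (\<Oplus>\<^bsub>M\<^esub>b\<in>B. a \<odot>\<^bsub>M\<^esub> (c b \<odot>\<^bsub>M\<^esub> b))"
    unfolding c(2) using B bc a by (intro finsum_smult_ldistr) auto
  also have "\<dots> = (\<Oplus>\<^bsub>M\<^esub>b\<in>B. c1 b \<odot>\<^bsub>M\<^esub> b)"
    using bc a by (intro finsum_cong_on) (auto simp: c1_def smult_assoc1)
  finally have e1: "\<zero>\<^bsub>M\<^esub> = (\<Oplus>\<^bsub>M\<^esub>b\<in>B. c1 b \<odot>\<^bsub>M\<^esub> b)" using ax by simp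
  have "(\<Oplus>\<^bsub>M\<^esub>b\<in>B. c2 b \<odot>\<^bsub>M\<^esub> b) = (\<Oplus>\<^bsub>M\<^esub>b\<in>B. \<zero>\<^bsub>M\<^esub>)"
    using bc by (intro finsum_cong_on) (auto simp: c2_def)
  hence e2: "\<zero>\<^bsub>M\<^esub> = (\<Oplus>\<^bsub>M\<^esub>b\<in>B. c2 b \<odot>\<^bsub>M\<^esub> b)" by simp
  have "c1 = c2" using uq[rule_format, OF M.zero_closed] c1E c2E e1 e2 by blast
  hence "\<And>b. b \<in> B \<Longrightarrow> a \<otimes>\<^bsub>R\<^esub> c b = \<zero>\<^bsub>R\<^esub>"
  proof -
    fix b assume "c1 = c2" "b \<in> B"
    have "c1 b = c2 b" using \<open>c1 = c2\<close> by simp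
    thus "a \<otimes>\<^bsub>R\<^esub> c b = \<zero>\<^bsub>R\<^esub>" using \<open>b \<in> B\<close> by (simp add: c1_def c2_def)
  qed
  hence cz: "\<And>b. b \<in> B \<Longrightarrow> c b = \<zero>\<^bsub>R\<^esub>" using a bc D.integral by blast
  have "x = (\<Oplus>\<^bsub>M\<^esub>b\<in>B. \<zero>\<^bsub>M\<^esub>)" unfolding c(2) using bc cz by (intro finsum_cong_on) auto
  thus ?thesis by simp
qed

context module begin

lemma lin_comb_eq_imp_relation:
  assumes S: "finite S" "S \<subseteq> carrier M" and c: "c \<in> S \<rightarrow> carrier R" and d: "d \<in> S \<rightarrow> carrier R"
    and eq: "(\<Oplus>\<^bsub>M\<^esub>s\<in>S. c s \<odot>\<^bsub>M\<^esub> s) = (\<Oplus>\<^bsub>M\<^esub>s\<in>S. d s \<odot>\<^bsub>M\<^esub> s)"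
  shows "(\<Oplus>\<^bsub>M\<^esub>s\<in>S. (c s \<ominus> d s) \<odot>\<^bsub>M\<^esub> s) = \<zero>\<^bsub>M\<^esub>"
proof -
  have sc: "\<And>s. s \<in> S \<Longrightarrow> s \<in> carrier M" using S by auto
  have cd: "\<And>s. s \<in> S \<Longrightarrow> c s \<in> carrier R" "\<And>s. s \<in> S \<Longrightarrow> d s \<in> carrier R" using c d by auto
  have "(\<Oplus>\<^bsub>M\<^esub>s\<in>S. c s \<odot>\<^bsub>M\<^esub> s)
      = (\<Oplus>\<^bsub>M\<^esub>s\<in>S. (c s \<ominus> d s) \<odot>\<^bsub>M\<^esub> s \<oplus>\<^bsub>M\<^esub> d s \<odot>\<^bsub>M\<^esub> s)"
    using cd sc by (intro finsum_cong_on) (auto simp: smult_l_distr[symmetric] ring_simprules)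
  also have "\<dots> = (\<Oplus>\<^bsub>M\<^esub>s\<in>S. (c s \<ominus> d s) \<odot>\<^bsub>M\<^esub> s) \<oplus>\<^bsub>M\<^esub> (\<Oplus>\<^bsub>M\<^esub>s\<in>S. d s \<odot>\<^bsub>M\<^esub> s)"
    using cd sc by (intro M.finsum_addf) auto
  finally have "(\<Oplus>\<^bsub>M\<^esub>s\<in>S. (c s \<ominus> d s) \<odot>\<^bsub>M\<^esub> s) \<oplus>\<^bsub>M\<^esub> (\<Oplus>\<^bsub>M\<^esub>s\<in>S. d s \<odot>\<^bsub>M\<^esub> s)
      = \<zero>\<^bsub>M\<^esub> \<oplus>\<^bsub>M\<^esub> (\<Oplus>\<^bsub>M\<^esub>s\<in>S. d s \<odot>\<^bsub>M\<^esub> s)"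
    using eq cd sc by (simp add: M.finsum_closed Pi_iff)
  thus ?thesis using M.add.right_cancel cd sc by (simp add: M.finsum_closed Pi_iff)
qed

lemma lin_span_remove_unit_coeff:
  assumes S: "finite S" "S \<subseteq> carrier M" and a: "a \<in> S \<rightarrow> carrier R"
    and rel: "(\<Oplus>\<^bsub>M\<^esub>s\<in>S. a s \<odot>\<^bsub>M\<^esub> s) = \<zero>\<^bsub>M\<^esub>" and s1: "s1 \<in> S" "a s1 \<in> Units R"
  shows "lin_span R M S \<subseteq> lin_span R M (S - {s1})"
proof -
  define S' where "S' = S - {s1}"
  have S': "finite S'" "S' \<subseteq> carrier M" using S unfolding S'_def by auto
  have SS': "S = insert s1 S'" "s1 \<notin> S'" using s1 unfolding S'_def by auto
  have ac: "\<And>s. s \<in> S \<Longrightarrow> a s \<in> carrier R" and sc: "\<And>s. s \<in> S \<Longrightarrow> s \<in> carrier M"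
    using a S by auto
  define y where "y = (\<Oplus>\<^bsub>M\<^esub>s\<in>S'. a s \<odot>\<^bsub>M\<^esub> s)"
  have y: "y \<in> lin_span R M S'" unfolding y_def
    using SS' ac by (intro lin_span_finsum[OF S' S'(1)] Pi_I lin_span_smult[OF S'] lin_span_generator[OF S']) auto
  have yc: "y \<in> carrier M" using y lin_span_subset[OF S'] by blast
  have "a s1 \<odot>\<^bsub>M\<^esub> s1 \<oplus>\<^bsub>M\<^esub> y = \<zero>\<^bsub>M\<^esub>"
    using rel unfolding y_def SS'(1) using M.finsum_insert[OF S'(1) SS'(2)] ac SS' sc
    by (simp add: Pi_iff)
  hence ny: "\<ominus>\<^bsub>M\<^esub> y = a s1 \<odot>\<^bsub>M\<^esub> s1"
    using M.minus_equality yc ac s1 sc by simp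
  have "inv (a s1) \<odot>\<^bsub>M\<^esub> (\<ominus>\<^bsub>M\<^esub> y) = (inv (a s1) \<otimes> a s1) \<odot>\<^bsub>M\<^esub> s1"
    unfolding ny by (rule smult_assoc1[symmetric]) (use s1 ac sc in auto)
  also have "\<dots> = s1" using s1 sc by simp
  finally have "s1 \<in> lin_span R M S'"
    using lin_span_smult[OF S' lin_span_neg[OF S' y], of "inv (a s1)"] s1 by simp
  hence "S \<subseteq> lin_span R M S'" using SS' lin_span_generator[OF S'] by auto
  thus ?thesis unfolding S'_def[symmetric]
    by (intro lin_span_minimal[OF S(1)] lin_span_subset[OF S'] zero_in_lin_span[OF S']
        lin_span_add[OF S'] lin_span_smult[OF S'])
qed

end

locale dvr_module = dvr R p + module R M
  for R :: "'a ring" (structure) and p and M :: "('a, 'c) module" (structure)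

context dvr_module begin

text \<open>If no coefficient is a unit, all of them are divisible by p and, M being p-torsion-free,
  the relation can be divided by p, lowering the valuation of the coefficient at s0.\<close>
lemma ex_relation_with_unit_coeff:
  assumes S: "finite S" "S \<subseteq> carrier M"
    and tf: "\<And>x. x \<in> carrier M \<Longrightarrow> p \<odot>\<^bsub>M\<^esub> x = \<zero>\<^bsub>M\<^esub> \<Longrightarrow> x = \<zero>\<^bsub>M\<^esub>"
  shows "a \<in> S \<rightarrow> carrier R \<Longrightarrow> (\<Oplus>\<^bsub>M\<^esub>s\<in>S. a s \<odot>\<^bsub>M\<^esub> s) = \<zero>\<^bsub>M\<^esub> \<Longrightarrow> s0 \<in> S \<Longrightarrow> u \<in> Units R
    \<Longrightarrow> a s0 = u \<otimes> p [^] (j::nat) \<Longrightarrow>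
    \<exists>a'. a' \<in> S \<rightarrow> carrier R \<and> (\<Oplus>\<^bsub>M\<^esub>s\<in>S. a' s \<odot>\<^bsub>M\<^esub> s) = \<zero>\<^bsub>M\<^esub> \<and> (\<exists>s1\<in>S. a' s1 \<in> Units R)"
proof (induction j arbitrary: a)
  case 0
  hence "a s0 \<in> Units R" by simp
  thus ?case using 0 by blast
next
  case (Suc j)
  show ?case
  proof (cases "\<exists>s\<in>S. a s \<in> Units R")
    case True thus ?thesis using Suc.prems by blast
  next
    case False
    hence ex: "\<forall>s\<in>S. \<exists>y\<in>carrier R. a s = y \<otimes> p" using nonunit_eq_mult_p Suc.prems(1) by blast
    define a' where "a' s = (SOME y. y \<in> carrier R \<and> a s = y \<otimes> p)" for s
    have a': "\<And>s. s \<in> S \<Longrightarrow> a' s \<in> carrier R \<and> a s = a' s \<otimes> p"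
    proof -
      fix s assume "s \<in> S"
      hence "\<exists>y. y \<in> carrier R \<and> a s = y \<otimes> p" using ex by blast
      thus "a' s \<in> carrier R \<and> a s = a' s \<otimes> p" unfolding a'_def by (rule someI_ex)
    qed
    have sc: "\<And>s. s \<in> S \<Longrightarrow> s \<in> carrier M" using S by auto
    have "(\<Oplus>\<^bsub>M\<^esub>s\<in>S. a s \<odot>\<^bsub>M\<^esub> s) = (\<Oplus>\<^bsub>M\<^esub>s\<in>S. p \<odot>\<^bsub>M\<^esub> (a' s \<odot>\<^bsub>M\<^esub> s))"
      using a' sc p_carr by (intro finsum_cong_on) (auto simp: smult_assoc1[symmetric] m_comm)
    also have "\<dots> = p \<odot>\<^bsub>M\<^esub> (\<Oplus>\<^bsub>M\<^esub>s\<in>S. a' s \<odot>\<^bsub>M\<^esub> s)"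
      using a' sc p_carr S by (intro finsum_smult_ldistr[symmetric]) auto
    finally have "p \<odot>\<^bsub>M\<^esub> (\<Oplus>\<^bsub>M\<^esub>s\<in>S. a' s \<odot>\<^bsub>M\<^esub> s) = \<zero>\<^bsub>M\<^esub>" using Suc.prems(2) by simp
    hence z: "(\<Oplus>\<^bsub>M\<^esub>s\<in>S. a' s \<odot>\<^bsub>M\<^esub> s) = \<zero>\<^bsub>M\<^esub>"
      using tf a' sc by (auto intro!: M.finsum_closed)
    have uc: "u \<in> carrier R" using Suc.prems(4) by auto
    have "a' s0 \<otimes> p = (u \<otimes> p [^] j) \<otimes> p"
      using a'[OF Suc.prems(3)] Suc.prems(5) uc p_carr by (simp add: m_assoc)
    hence "a' s0 = u \<otimes> p [^] j"
      using m_rcancel[of p "a' s0" "u \<otimes> p [^] j"] p_nz p_carr a'[OF Suc.prems(3)] uc by simp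
    moreover have "a' \<in> S \<rightarrow> carrier R" using a' by auto
    ultimately show ?thesis using Suc.IH[of a'] z Suc.prems(3,4) by blast
  qed
qed

text \<open>A generating set of minimal size is a basis: a nontrivial relation could be turned into one
  with a unit coefficient, making a generator redundant.\<close>
lemma torsion_free_imp_fin_free:
  assumes fg: "fin_gen R M"
    and tf: "\<And>x. x \<in> carrier M \<Longrightarrow> p \<odot>\<^bsub>M\<^esub> x = \<zero>\<^bsub>M\<^esub> \<Longrightarrow> x = \<zero>\<^bsub>M\<^esub>"
  shows "fin_free R M"
proof -
  define P where "P S \<longleftrightarrow> finite S \<and> S \<subseteq> carrier M \<and> carrier M \<subseteq> lin_span R M S" for S
  obtain S0 where "P S0" using fin_gen_iff_lin_span[THEN iffD1, OF fg] unfolding P_def by blast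
  then obtain S where PS: "P S" and minS: "\<And>S'. P S' \<Longrightarrow> card S \<le> card S'"
    using ex_has_least_nat[of P S0 card] by blast
  have Sf: "finite S" and Ss: "S \<subseteq> carrier M" and Sg: "carrier M \<subseteq> lin_span R M S"
    using PS unfolding P_def by auto
  have uniq: "c = d" if c: "c \<in> S \<rightarrow>\<^sub>E carrier R" and d: "d \<in> S \<rightarrow>\<^sub>E carrier R"
    and eq: "(\<Oplus>\<^bsub>M\<^esub>s\<in>S. c s \<odot>\<^bsub>M\<^esub> s) = (\<Oplus>\<^bsub>M\<^esub>s\<in>S. d s \<odot>\<^bsub>M\<^esub> s)" for c d
  proof (rule ccontr)
    assume "c \<noteq> d"
    then obtain s0 where s0: "s0 \<in> S" "c s0 \<noteq> d s0" using PiE_ext[OF c d] by blast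
    define a where "a s = c s \<ominus> d s" for s
    have a: "a \<in> S \<rightarrow> carrier R" unfolding a_def using c d by auto
    have rel: "(\<Oplus>\<^bsub>M\<^esub>s\<in>S. a s \<odot>\<^bsub>M\<^esub> s) = \<zero>\<^bsub>M\<^esub>"
      unfolding a_def using lin_comb_eq_imp_relation[OF Sf Ss _ _ eq] c d by auto
    have cd0: "c s0 \<in> carrier R" "d s0 \<in> carrier R" using c d s0 by auto
    hence "c s0 = a s0 \<oplus> d s0" unfolding a_def by (simp add: ring_simprules)
    hence "a s0 \<noteq> \<zero>" using s0 cd0 by auto
    then obtain u j where uj: "u \<in> Units R" "a s0 = u \<otimes> p [^] (j::nat)"
      using eq_unit_mult_p_pow a s0 by blast
    obtain a' s1 where a': "a' \<in> S \<rightarrow> carrier R" "(\<Oplus>\<^bsub>M\<^esub>s\<in>S. a' s \<odot>\<^bsub>M\<^esub> s) = \<zero>\<^bsub>M\<^esub>"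
        and s1: "s1 \<in> S" "a' s1 \<in> Units R"
      using ex_relation_with_unit_coeff[OF Sf Ss tf a rel s0(1) uj] by blast
    have "P (S - {s1})"
      using Sf Ss Sg lin_span_remove_unit_coeff[OF Sf Ss a' s1] unfolding P_def by auto
    hence "card S \<le> card (S - {s1})" using minS by blast
    thus False using card_Diff1_less[OF Sf s1(1)] by simp
  qed
  have "\<forall>x\<in>carrier M. \<exists>!c. c \<in> S \<rightarrow>\<^sub>E carrier R \<and> x = (\<Oplus>\<^bsub>M\<^esub>s\<in>S. c s \<odot>\<^bsub>M\<^esub> s)"
  proof
    fix x assume "x \<in> carrier M"
    then obtain c where c: "c \<in> S \<rightarrow> carrier R" "x = (\<Oplus>\<^bsub>M\<^esub>s\<in>S. c s \<odot>\<^bsub>M\<^esub> s)"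
      using Sg unfolding lin_span_def by blast
    have "x = (\<Oplus>\<^bsub>M\<^esub>s\<in>S. restrict c S s \<odot>\<^bsub>M\<^esub> s)"
      unfolding c(2) using c Ss by (intro finsum_cong_on) (auto simp: Pi_iff subsetD)
    moreover have "restrict c S \<in> S \<rightarrow>\<^sub>E carrier R" using c by auto
    ultimately show "\<exists>!c. c \<in> S \<rightarrow>\<^sub>E carrier R \<and> x = (\<Oplus>\<^bsub>M\<^esub>s\<in>S. c s \<odot>\<^bsub>M\<^esub> s)"
      using uniq by blast
  qed
  thus ?thesis unfolding fin_free_def using Sf Ss by blast
qed

end

lemma fin_free_ex_inj_coords:
  fixes R :: "'r ring" and M :: "('r,'m) module"
  assumes mod: "module R M" and ff: "fin_free R M"
  shows "\<exists>k :: 'm \<Rightarrow> (nat \<Rightarrow> 'r). inj_on k (carrier M)"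
proof -
  interpret module R M by fact
  obtain B where B: "finite B" "B \<subseteq> carrier M"
    and uq: "\<forall>x\<in>carrier M. \<exists>!c. c \<in> B \<rightarrow>\<^sub>E carrier R \<and> x = (\<Oplus>\<^bsub>M\<^esub>b\<in>B. c b \<odot>\<^bsub>M\<^esub> b)"
    using ff unfolding fin_free_def by blast
  obtain h where h: "bij_betw h {0..<card B} B" using ex_bij_betw_nat_finite[OF B(1)] by blast
  define coef where "coef x = (THE c. c \<in> B \<rightarrow>\<^sub>E carrier R \<and> x = (\<Oplus>\<^bsub>M\<^esub>b\<in>B. c b \<odot>\<^bsub>M\<^esub> b))" for x
  have coef: "coef x \<in> B \<rightarrow>\<^sub>E carrier R \<and> x = (\<Oplus>\<^bsub>M\<^esub>b\<in>B. coef x b \<odot>\<^bsub>M\<^esub> b)"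
    if "x \<in> carrier M" for x
    unfolding coef_def by (rule theI'[OF uq[rule_format, OF that]])
  define k where "k x = (\<lambda>i. coef x (h i))" for x
  have "inj_on k (carrier M)"
  proof (rule inj_onI)
    fix x y assume xy: "x \<in> carrier M" "y \<in> carrier M" "k x = k y"
    have "\<forall>b\<in>B. coef x b = coef y b"
    proof
      fix b assume "b \<in> B"
      then obtain i where "b = h i" using h unfolding bij_betw_def by auto
      thus "coef x b = coef y b" using fun_cong[OF xy(3), of i] unfolding k_def by simp
    qed
    moreover have "coef x \<in> B \<rightarrow>\<^sub>E carrier R" "coef y \<in> B \<rightarrow>\<^sub>E carrier R"
      using coef[OF xy(1)] coef[OF xy(2)] by blast+
    ultimately have "coef x = coef y" by (intro PiE_ext) auto
    have "x = (\<Oplus>\<^bsub>M\<^esub>b\<in>B. coef x b \<odot>\<^bsub>M\<^esub> b)" using coef[OF xy(1)] by blast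
    also have "\<dots> = (\<Oplus>\<^bsub>M\<^esub>b\<in>B. coef y b \<odot>\<^bsub>M\<^esub> b)" using \<open>coef x = coef y\<close> by (simp only:)
    also have "\<dots> = y"
    proof -
      have "y = (\<Oplus>\<^bsub>M\<^esub>b\<in>B. coef y b \<odot>\<^bsub>M\<^esub> b)" using coef[OF xy(2)] by blast
      thus ?thesis by (rule sym)
    qed
    finally show "x = y" .
  qed
  thus ?thesis by blast
qed

lemma ex_rep_copy_coords:
  fixes R :: "'r ring" and M :: "('r,'m) module"
  assumes rep: "is_rep G R M rho" and ff: "fin_free R M"
  shows "\<exists>q :: 'm \<Rightarrow> (nat \<Rightarrow> 'r). rep_copy G R M rho q"
proof -
  have mod: "module R M" using is_rep_module[OF rep] .
  interpret module R M by fact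
  obtain k :: "'m \<Rightarrow> (nat \<Rightarrow> 'r)" where k: "inj_on k (carrier M)" using fin_free_ex_inj_coords[OF mod ff] by blast
  have "rep_copy G R M rho k"
    unfolding rep_copy_def quotient_map_def
  proof (intro conjI rep allI impI)
    fix x y assume xy: "x \<in> carrier M" "y \<in> carrier M"
    thus "(k x = k y) = (x \<ominus>\<^bsub>M\<^esub> y \<in> {\<zero>\<^bsub>M\<^esub>})"
      using k M.minus_eq_zero_iff[OF xy] unfolding inj_on_def by auto
  qed (auto simp: is_rep_action_zero[OF rep])
  thus ?thesis by blast
qed

context rep_copy begin

lemma q_finsum_smult:
  assumes B: "finite B" "B \<subseteq> carrier M" and d: "\<And>b. b \<in> B \<Longrightarrow> d b \<in> carrier R"
  shows "q (\<Oplus>\<^bsub>M\<^esub>b\<in>B. d b \<odot>\<^bsub>M\<^esub> b)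
       = (\<Oplus>\<^bsub>quotient_module M q\<^esub>t\<in>q ` B. d (repr M q t) \<odot>\<^bsub>quotient_module M q\<^esub> t)"
proof -
  interpret Q: module R "quotient_module M q" by (rule module_quotient)
  have bc: "\<And>b. b \<in> B \<Longrightarrow> b \<in> carrier M" using B by auto
  have injB: "inj_on q B" unfolding inj_on_def using q_inj bc by blast
  have qc: "q \<in> carrier M \<rightarrow> carrier (quotient_module M q)" by simp
  have tc: "(\<lambda>b. d b \<odot>\<^bsub>M\<^esub> b) \<in> B \<rightarrow> carrier M" using d bc by simp
  have "q (\<Oplus>\<^bsub>M\<^esub>b\<in>B. d b \<odot>\<^bsub>M\<^esub> b) = (\<Oplus>\<^bsub>quotient_module M q\<^esub>b\<in>B. q (d b \<odot>\<^bsub>M\<^esub> b))"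
    by (rule finsum_hom[OF M.abelian_group_axioms Q.abelian_group_axioms qc q_add[symmetric] B(1) tc])
  also have "\<dots> = (\<Oplus>\<^bsub>quotient_module M q\<^esub>b\<in>B. d (repr M q (q b)) \<odot>\<^bsub>quotient_module M q\<^esub> q b)"
    using d bc by (intro Q.finsum_cong_on) (simp_all add: q_smult repr_q)
  also have "\<dots> = (\<Oplus>\<^bsub>quotient_module M q\<^esub>t\<in>q ` B. d (repr M q t) \<odot>\<^bsub>quotient_module M q\<^esub> t)"
    using d bc repr_q by (intro Q.finsum_reindex[symmetric] injB) (auto simp: q_smult)
  finally show ?thesis .
qed

lemma fin_free_quotient:
  assumes ff: "fin_free R M" shows "fin_free R (quotient_module M q)"
proof -
  interpret P: module R "quotient_module M q" by (rule module_quotient)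
  obtain B where B: "finite B" "B \<subseteq> carrier M"
    and uq: "\<forall>x\<in>carrier M. \<exists>!c. c \<in> B \<rightarrow>\<^sub>E carrier R \<and> x = (\<Oplus>\<^bsub>M\<^esub>b\<in>B. c b \<odot>\<^bsub>M\<^esub> b)"
    using ff unfolding fin_free_def by blast
  have bc: "\<And>b. b \<in> B \<Longrightarrow> b \<in> carrier M" using B by auto
  have "\<forall>u\<in>carrier (quotient_module M q). \<exists>!c. c \<in> q ` B \<rightarrow>\<^sub>E carrier R \<and>
          u = (\<Oplus>\<^bsub>quotient_module M q\<^esub>t\<in>q ` B. c t \<odot>\<^bsub>quotient_module M q\<^esub> t)"
  proof
    fix u assume "u \<in> carrier (quotient_module M q)"
    then obtain x where x: "x \<in> carrier M" "u = q x" by auto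
    obtain c0 where c0: "c0 \<in> B \<rightarrow>\<^sub>E carrier R" "x = (\<Oplus>\<^bsub>M\<^esub>b\<in>B. c0 b \<odot>\<^bsub>M\<^esub> b)"
      using uq x by blast
    define c where "c = (\<lambda>t\<in>q ` B. c0 (repr M q t))"
    have cE: "c \<in> q ` B \<rightarrow>\<^sub>E carrier R" unfolding c_def using c0 bc repr_q by auto
    have "u = (\<Oplus>\<^bsub>quotient_module M q\<^esub>t\<in>q ` B. c0 (repr M q t) \<odot>\<^bsub>quotient_module M q\<^esub> t)"
      using q_finsum_smult[OF B, of c0] c0 x by auto
    also have "\<dots> = (\<Oplus>\<^bsub>quotient_module M q\<^esub>t\<in>q ` B. c t \<odot>\<^bsub>quotient_module M q\<^esub> t)"
      using c0 bc repr_q by (intro P.finsum_cong_on) (auto simp: c_def q_smult PiE_iff)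
    finally have ex: "u = (\<Oplus>\<^bsub>quotient_module M q\<^esub>t\<in>q ` B. c t \<odot>\<^bsub>quotient_module M q\<^esub> t)" .
    have un: "d = c" if dE: "d \<in> q ` B \<rightarrow>\<^sub>E carrier R"
      and du: "u = (\<Oplus>\<^bsub>quotient_module M q\<^esub>t\<in>q ` B. d t \<odot>\<^bsub>quotient_module M q\<^esub> t)" for d
    proof -
      define d0 where "d0 = (\<lambda>b\<in>B. d (q b))"
      have d0E: "d0 \<in> B \<rightarrow>\<^sub>E carrier R" unfolding d0_def using dE by auto
      have d0c: "\<And>b. b \<in> B \<Longrightarrow> d0 b \<in> carrier R" using d0E by auto
      have "(\<Oplus>\<^bsub>quotient_module M q\<^esub>t\<in>q ` B. d t \<odot>\<^bsub>quotient_module M q\<^esub> t) = (\<Oplus>\<^bsub>quotient_module M q\<^esub>t\<in>q ` B. d0 (repr M q t) \<odot>\<^bsub>quotient_module M q\<^esub> t)"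
        using dE bc repr_q d0c by (intro P.finsum_cong_on) (auto simp: d0_def q_smult PiE_iff)
      also have "\<dots> = q (\<Oplus>\<^bsub>M\<^esub>b\<in>B. d0 b \<odot>\<^bsub>M\<^esub> b)" using q_finsum_smult[OF B d0c] by simp
      finally have "q x = q (\<Oplus>\<^bsub>M\<^esub>b\<in>B. d0 b \<odot>\<^bsub>M\<^esub> b)" using du x by simp
      moreover have "(\<Oplus>\<^bsub>M\<^esub>b\<in>B. d0 b \<odot>\<^bsub>M\<^esub> b) \<in> carrier M" using d0c bc by (intro M.finsum_closed) auto
      ultimately have "x = (\<Oplus>\<^bsub>M\<^esub>b\<in>B. d0 b \<odot>\<^bsub>M\<^esub> b)" using q_inj x by blast
      hence "d0 = c0" using uq x c0 d0E by blast
      show "d = c"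
      proof (rule PiE_ext[OF dE cE])
        fix t assume "t \<in> q ` B"
        then obtain b where b: "b \<in> B" "t = q b" by auto
        have "d0 b = c0 b" using \<open>d0 = c0\<close> by simp
        thus "d t = c t" using b bc repr_q unfolding d0_def c_def by auto
      qed
    qed
    show "\<exists>!c. c \<in> q ` B \<rightarrow>\<^sub>E carrier R \<and> u = (\<Oplus>\<^bsub>quotient_module M q\<^esub>t\<in>q ` B. c t \<odot>\<^bsub>quotient_module M q\<^esub> t)"
      using cE ex un by blast
  qed
  moreover have "finite (q ` B)" "q ` B \<subseteq> carrier (quotient_module M q)" using B by auto
  ultimately show ?thesis unfolding fin_free_def by blast
qed

end

text \<open>A free E is its own weak lift; it only has to be moved to the carrier type nat \<Rightarrow> 'r of
  has_weak_lift, using coordinates in a basis.\<close>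
lemma torsion_free_has_weak_lift:
  fixes R :: "'r ring" and E :: "('r,'e) module"
  assumes dv: "dvr R p" and E: "in_Rep G R E sig"
    and tf: "\<And>x. x \<in> carrier E \<Longrightarrow> p \<odot>\<^bsub>E\<^esub> x = \<zero>\<^bsub>E\<^esub> \<Longrightarrow> x = \<zero>\<^bsub>E\<^esub>"
  shows "has_weak_lift G R E sig"
proof -
  have rep: "is_rep G R E sig" and fg: "fin_gen R E" using E unfolding in_Rep_def by blast+
  interpret dvr_module R p E unfolding dvr_module_def using dv is_rep_module[OF rep] by blast
  have ff: "fin_free R E" using torsion_free_imp_fin_free[OF fg tf] .
  obtain k :: "'e \<Rightarrow> (nat \<Rightarrow> 'r)" where k: "rep_copy G R E sig k"
    using ex_rep_copy_coords[OF rep ff] by blast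
  interpret K: rep_copy G R E sig k by fact
  have "in_Rep_free G R (quotient_module E k) (quotient_action E k sig)"
    unfolding in_Rep_free_def using K.is_rep_quotient K.fin_gen_quotient[OF fg] K.fin_free_quotient[OF ff] by blast
  hence "is_weak_lift G R E sig (quotient_module E k) (quotient_action E k sig) (repr E k)"
    unfolding is_weak_lift_def using K.rep_hom_repr K.repr_surj by blast
  thus ?thesis unfolding has_weak_lift_def by blast
qed

section \<open>Torsion exponents\<close>

definition torsion_exponent :: "'r ring \<Rightarrow> ('r,'m) module \<Rightarrow> 'r \<Rightarrow> nat \<Rightarrow> bool" where
  "torsion_exponent R M p n \<longleftrightarrow> (\<forall>x\<in>carrier M. (\<exists>k::nat. (p [^]\<^bsub>R\<^esub> k) \<odot>\<^bsub>M\<^esub> x = \<zero>\<^bsub>M\<^esub>) \<longrightarrow> (p [^]\<^bsub>R\<^esub> n) \<odot>\<^bsub>M\<^esub> x = \<zero>\<^bsub>M\<^esub>)"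

lemma (in rep_copy) torsion_exponent_quotient:
  assumes "torsion_exponent R M p n" "p \<in> carrier R" shows "torsion_exponent R (quotient_module M q) p n"
  unfolding torsion_exponent_def
proof (intro ballI impI)
  fix u assume "u \<in> carrier (quotient_module M q)"
  then obtain x where x: "x \<in> carrier M" "u = q x" by auto
  assume "\<exists>k::nat. (p [^]\<^bsub>R\<^esub> k) \<odot>\<^bsub>quotient_module M q\<^esub> u = \<zero>\<^bsub>quotient_module M q\<^esub>"
  then obtain k :: nat where "(p [^]\<^bsub>R\<^esub> k) \<odot>\<^bsub>quotient_module M q\<^esub> u = \<zero>\<^bsub>quotient_module M q\<^esub>" by blast
  hence "q ((p [^]\<^bsub>R\<^esub> k) \<odot>\<^bsub>M\<^esub> x) = \<zero>\<^bsub>quotient_module M q\<^esub>" using x assms by (simp add: q_smult)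
  hence "(p [^]\<^bsub>R\<^esub> k) \<odot>\<^bsub>M\<^esub> x = \<zero>\<^bsub>M\<^esub>" using q_zero_iff x assms by simp
  hence "(p [^]\<^bsub>R\<^esub> n) \<odot>\<^bsub>M\<^esub> x = \<zero>\<^bsub>M\<^esub>" using assms(1) x unfolding torsion_exponent_def by blast
  thus "(p [^]\<^bsub>R\<^esub> n) \<odot>\<^bsub>quotient_module M q\<^esub> u = \<zero>\<^bsub>quotient_module M q\<^esub>" using x assms by (simp add: q_smult)
qed

context dvr_module begin

lemma p_pow_smult_in_lin_span:
  assumes S: "finite S" "S \<subseteq> carrier M" and s: "s \<in> carrier M"
    and a: "a \<in> carrier R" "a \<noteq> \<zero>" and as: "a \<odot>\<^bsub>M\<^esub> s \<in> lin_span R M S"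
  shows "\<exists>i::nat. (p [^] i) \<odot>\<^bsub>M\<^esub> s \<in> lin_span R M S"
proof -
  obtain u i where ui: "u \<in> Units R" "a = u \<otimes> p [^] (i::nat)" using eq_unit_mult_p_pow a by blast
  have uc: "u \<in> carrier R" "inv u \<in> carrier R" using ui by auto
  have "inv u \<odot>\<^bsub>M\<^esub> (a \<odot>\<^bsub>M\<^esub> s) = (inv u \<otimes> u \<otimes> p [^] i) \<odot>\<^bsub>M\<^esub> s"
    unfolding ui(2) using uc s by (simp add: smult_assoc1 m_assoc)
  also have "\<dots> = (p [^] i) \<odot>\<^bsub>M\<^esub> s" using ui by simp
  finally show ?thesis using lin_span_smult[OF S as uc(2)] by metis
qed

lemma torsion_lin_span_insert_dependent:
  assumes S: "finite S" "S \<subseteq> carrier M" and s: "s \<in> carrier M" "s \<notin> S"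
    and j: "(p [^] (j::nat)) \<odot>\<^bsub>M\<^esub> s \<in> lin_span R M S"
    and N: "\<forall>y\<in>lin_span R M S. (\<exists>k::nat. (p [^] k) \<odot>\<^bsub>M\<^esub> y = \<zero>\<^bsub>M\<^esub>) \<longrightarrow>
      (p [^] (N::nat)) \<odot>\<^bsub>M\<^esub> y = \<zero>\<^bsub>M\<^esub>"
  shows "\<forall>x\<in>lin_span R M (insert s S). (\<exists>k::nat. (p [^] k) \<odot>\<^bsub>M\<^esub> x = \<zero>\<^bsub>M\<^esub>) \<longrightarrow>
      (p [^] (N + j)) \<odot>\<^bsub>M\<^esub> x = \<zero>\<^bsub>M\<^esub>"
proof (intro ballI impI)
  fix x assume x: "x \<in> lin_span R M (insert s S)" and "\<exists>k::nat. (p [^] k) \<odot>\<^bsub>M\<^esub> x = \<zero>\<^bsub>M\<^esub>"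
  then obtain k :: nat where k: "(p [^] k) \<odot>\<^bsub>M\<^esub> x = \<zero>\<^bsub>M\<^esub>" by blast
  obtain r y where ry: "r \<in> carrier R" "y \<in> lin_span R M S" "x = r \<odot>\<^bsub>M\<^esub> s \<oplus>\<^bsub>M\<^esub> y"
    using lin_span_insert_decomp[OF S s x] by blast
  have yc: "y \<in> carrier M" and xc: "x \<in> carrier M" using ry lin_span_subset[OF S] s by auto
  have "(p [^] j) \<odot>\<^bsub>M\<^esub> x = r \<odot>\<^bsub>M\<^esub> ((p [^] j) \<odot>\<^bsub>M\<^esub> s) \<oplus>\<^bsub>M\<^esub> (p [^] j) \<odot>\<^bsub>M\<^esub> y"
    unfolding ry(3) using ry s yc by (simp add: smult_r_distr smult_assoc1[symmetric] m_comm)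
  also have "\<dots> \<in> lin_span R M S"
    using lin_span_add[OF S lin_span_smult[OF S j ry(1)] lin_span_smult[OF S ry(2)]] by simp
  finally have pj: "(p [^] j) \<odot>\<^bsub>M\<^esub> x \<in> lin_span R M S" .
  have "(p [^] k) \<odot>\<^bsub>M\<^esub> ((p [^] j) \<odot>\<^bsub>M\<^esub> x) = (p [^] j) \<odot>\<^bsub>M\<^esub> ((p [^] k) \<odot>\<^bsub>M\<^esub> x)"
    using xc by (simp add: smult_assoc1[symmetric] m_comm)
  hence "(p [^] N) \<odot>\<^bsub>M\<^esub> ((p [^] j) \<odot>\<^bsub>M\<^esub> x) = \<zero>\<^bsub>M\<^esub>" using N pj k by auto
  thus "(p [^] (N + j)) \<odot>\<^bsub>M\<^esub> x = \<zero>\<^bsub>M\<^esub>"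
    using xc p_carr by (simp add: smult_assoc1[symmetric] nat_pow_mult)
qed

lemma torsion_lin_span_insert_independent:
  assumes S: "finite S" "S \<subseteq> carrier M" and s: "s \<in> carrier M" "s \<notin> S"
    and indep: "\<And>j::nat. (p [^] j) \<odot>\<^bsub>M\<^esub> s \<notin> lin_span R M S"
    and x: "x \<in> lin_span R M (insert s S)" and k: "(p [^] (k::nat)) \<odot>\<^bsub>M\<^esub> x = \<zero>\<^bsub>M\<^esub>"
  shows "x \<in> lin_span R M S"
proof -
  obtain r y where ry: "r \<in> carrier R" "y \<in> lin_span R M S" "x = r \<odot>\<^bsub>M\<^esub> s \<oplus>\<^bsub>M\<^esub> y"
    using lin_span_insert_decomp[OF S s x] by blast
  have yc: "y \<in> carrier M" using ry lin_span_subset[OF S] by blast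
  have "(p [^] k \<otimes> r) \<odot>\<^bsub>M\<^esub> s \<oplus>\<^bsub>M\<^esub> (p [^] k) \<odot>\<^bsub>M\<^esub> y = \<zero>\<^bsub>M\<^esub>"
    using k unfolding ry(3) using ry s yc by (simp add: smult_r_distr smult_assoc1)
  hence "(p [^] k \<otimes> r) \<odot>\<^bsub>M\<^esub> s = \<ominus>\<^bsub>M\<^esub> ((p [^] k) \<odot>\<^bsub>M\<^esub> y)"
    using M.minus_equality ry s yc by simp
  also have "\<dots> \<in> lin_span R M S" using lin_span_neg[OF S lin_span_smult[OF S ry(2)]] by simp
  finally have "p [^] k \<otimes> r = \<zero>"
    using p_pow_smult_in_lin_span[OF S s(1)] indep ry(1) by (meson m_closed p_pow_closed)
  hence "r = \<zero>" using integral[of "p [^] k" r] p_pow_nonzero ry by auto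
  thus ?thesis using ry yc s by simp
qed

lemma torsion_exponent_lin_span:
  assumes "finite S" "S \<subseteq> carrier M"
  shows "\<exists>N::nat. \<forall>x\<in>lin_span R M S.
           (\<exists>k::nat. (p [^] k) \<odot>\<^bsub>M\<^esub> x = \<zero>\<^bsub>M\<^esub>) \<longrightarrow> (p [^] N) \<odot>\<^bsub>M\<^esub> x = \<zero>\<^bsub>M\<^esub>"
  using assms
proof (induction S rule: finite_induct)
  case empty
  have "lin_span R M {} \<subseteq> {\<zero>\<^bsub>M\<^esub>}" unfolding lin_span_def by auto
  hence "\<forall>x\<in>lin_span R M {}. (p [^] (0::nat)) \<odot>\<^bsub>M\<^esub> x = \<zero>\<^bsub>M\<^esub>" by auto
  thus ?case by blast
next
  case (insert s S)
  have S: "finite S" "S \<subseteq> carrier M" and s: "s \<in> carrier M" "s \<notin> S" using insert by auto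
  obtain N :: nat where N: "\<forall>y\<in>lin_span R M S. (\<exists>k::nat. (p [^] k) \<odot>\<^bsub>M\<^esub> y = \<zero>\<^bsub>M\<^esub>) \<longrightarrow>
      (p [^] N) \<odot>\<^bsub>M\<^esub> y = \<zero>\<^bsub>M\<^esub>"
    using insert by blast
  show ?case
  proof (cases "\<exists>j::nat. (p [^] j) \<odot>\<^bsub>M\<^esub> s \<in> lin_span R M S")
    case True
    then obtain j :: nat where "(p [^] j) \<odot>\<^bsub>M\<^esub> s \<in> lin_span R M S" by blast
    from torsion_lin_span_insert_dependent[OF S s this N] show ?thesis by blast
  next
    case False
    hence "\<forall>x\<in>lin_span R M (insert s S). (\<exists>k::nat. (p [^] k) \<odot>\<^bsub>M\<^esub> x = \<zero>\<^bsub>M\<^esub>) \<longrightarrow>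
        (p [^] N) \<odot>\<^bsub>M\<^esub> x = \<zero>\<^bsub>M\<^esub>"
      using torsion_lin_span_insert_independent[OF S s] N by blast
    thus ?thesis by blast
  qed
qed

lemma ex_torsion_exponent:
  assumes "fin_gen R M" shows "\<exists>n. torsion_exponent R M p n"
proof -
  obtain S where S: "finite S" "S \<subseteq> carrier M" "carrier M \<subseteq> lin_span R M S"
    using fin_gen_iff_lin_span[THEN iffD1, OF assms] by blast
  obtain N :: nat where "\<forall>x\<in>lin_span R M S.
      (\<exists>k::nat. (p [^] k) \<odot>\<^bsub>M\<^esub> x = \<zero>\<^bsub>M\<^esub>) \<longrightarrow> (p [^] N) \<odot>\<^bsub>M\<^esub> x = \<zero>\<^bsub>M\<^esub>"
    using torsion_exponent_lin_span[OF S(1,2)] by blast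
  hence "torsion_exponent R M p N" using S(3) unfolding torsion_exponent_def by blast
  thus ?thesis by blast
qed

end

section \<open>Pullbacks\<close>

definition pullback :: "('r,'l) module \<Rightarrow> ('r,'e) module \<Rightarrow> ('l \<Rightarrow> 'v) \<Rightarrow> ('e \<Rightarrow> 'v) \<Rightarrow> ('r, 'l \<times> 'e) module" where
  "pullback L E f q = \<lparr>carrier = {x. fst x \<in> carrier L \<and> snd x \<in> carrier E \<and> f (fst x) = q (snd x)},
     monoid.mult = (\<lambda>x y. x), one = (\<zero>\<^bsub>L\<^esub>, \<zero>\<^bsub>E\<^esub>), ring.zero = (\<zero>\<^bsub>L\<^esub>, \<zero>\<^bsub>E\<^esub>),
     ring.add = (\<lambda>x y. (fst x \<oplus>\<^bsub>L\<^esub> fst y, snd x \<oplus>\<^bsub>E\<^esub> snd y)),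
     smult = (\<lambda>a x. (a \<odot>\<^bsub>L\<^esub> fst x, a \<odot>\<^bsub>E\<^esub> snd x))\<rparr>"

lemma pullback_simps[simp]:
  "carrier (pullback L E f q) = {x. fst x \<in> carrier L \<and> snd x \<in> carrier E \<and> f (fst x) = q (snd x)}"
  "ring.zero (pullback L E f q) = (\<zero>\<^bsub>L\<^esub>, \<zero>\<^bsub>E\<^esub>)"
  "ring.add (pullback L E f q) x y = (fst x \<oplus>\<^bsub>L\<^esub> fst y, snd x \<oplus>\<^bsub>E\<^esub> snd y)"
  "smult (pullback L E f q) a x = (a \<odot>\<^bsub>L\<^esub> fst x, a \<odot>\<^bsub>E\<^esub> snd x)"
  unfolding pullback_def by simp_all

definition pullback_action :: "('g \<Rightarrow> 'l \<Rightarrow> 'l) \<Rightarrow> ('g \<Rightarrow> 'e \<Rightarrow> 'e) \<Rightarrow> 'g \<Rightarrow> 'l \<times> 'e \<Rightarrow> 'l \<times> 'e" where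
  "pullback_action lam sig g x = (lam g (fst x), sig g (snd x))"

locale rep_pullback =
  fixes G :: "'g monoid" and R :: "'r ring" and L :: "('r,'l) module" and lam
    and V :: "('r,'v) module" and vr and f and E :: "('r,'e) module" and sig and q
  assumes L: "is_rep G R L lam" and V: "is_rep G R V vr" and E: "is_rep G R E sig"
    and f: "rep_hom G R L lam V vr f" and q: "rep_hom G R E sig V vr q"

context rep_pullback begin

lemma module_L: "module R L" using L is_rep_module by blast
lemma module_E: "module R E" using E is_rep_module by blast
lemma module_V: "module R V" using V is_rep_module by blast

lemma f_simps: "l \<in> carrier L \<Longrightarrow> l' \<in> carrier L \<Longrightarrow> f (l \<oplus>\<^bsub>L\<^esub> l') = f l \<oplus>\<^bsub>V\<^esub> f l'"
  "a \<in> carrier R \<Longrightarrow> l \<in> carrier L \<Longrightarrow> f (a \<odot>\<^bsub>L\<^esub> l) = a \<odot>\<^bsub>V\<^esub> f l"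
  "g \<in> carrier G \<Longrightarrow> l \<in> carrier L \<Longrightarrow> f (lam g l) = vr g (f l)"
  "f \<zero>\<^bsub>L\<^esub> = \<zero>\<^bsub>V\<^esub>"
  using f rep_hom_zero[OF module_L module_V f] unfolding rep_hom_def by auto

lemma q_simps: "e \<in> carrier E \<Longrightarrow> e' \<in> carrier E \<Longrightarrow> q (e \<oplus>\<^bsub>E\<^esub> e') = q e \<oplus>\<^bsub>V\<^esub> q e'"
  "a \<in> carrier R \<Longrightarrow> e \<in> carrier E \<Longrightarrow> q (a \<odot>\<^bsub>E\<^esub> e) = a \<odot>\<^bsub>V\<^esub> q e"
  "g \<in> carrier G \<Longrightarrow> e \<in> carrier E \<Longrightarrow> q (sig g e) = vr g (q e)"
  "q \<zero>\<^bsub>E\<^esub> = \<zero>\<^bsub>V\<^esub>"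
  using q rep_hom_zero[OF module_E module_V q] unfolding rep_hom_def by auto

lemma module_pullback: "module R (pullback L E f q)"
proof -
  interpret L: module R L by (rule module_L)
  interpret E: module R E by (rule module_E)
  interpret V: module R V by (rule module_V)
  show ?thesis
  proof (rule moduleI)
    show "cring R" by (rule L.is_cring)
    show "abelian_group (pullback L E f q)"
    proof (rule abelian_groupI)
      fix x assume x: "x \<in> carrier (pullback L E f q)"
      let ?y = "((\<ominus>\<^bsub>R\<^esub> \<one>\<^bsub>R\<^esub>) \<odot>\<^bsub>L\<^esub> fst x, (\<ominus>\<^bsub>R\<^esub> \<one>\<^bsub>R\<^esub>) \<odot>\<^bsub>E\<^esub> snd x)"
      have "?y \<in> carrier (pullback L E f q)" using x by (simp add: f_simps q_simps)
      moreover have "?y \<oplus>\<^bsub>pullback L E f q\<^esub> x = \<zero>\<^bsub>pullback L E f q\<^esub>"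
        using x by (simp add: L.smult_l_minus E.smult_l_minus L.l_neg E.l_neg)
      ultimately show "\<exists>y\<in>carrier (pullback L E f q). y \<oplus>\<^bsub>pullback L E f q\<^esub> x = \<zero>\<^bsub>pullback L E f q\<^esub>" by blast
    qed (auto simp: f_simps q_simps L.a_ac E.a_ac)
  qed (auto simp: f_simps q_simps L.smult_l_distr E.smult_l_distr L.smult_r_distr E.smult_r_distr
      L.smult_assoc1 E.smult_assoc1)
qed

lemma is_rep_pullback: "is_rep G R (pullback L E f q) (pullback_action lam sig)"
  unfolding is_rep_def pullback_action_def
  using L E module_pullback f_simps q_simps unfolding is_rep_def by auto

lemma rep_hom_snd: "rep_hom G R (pullback L E f q) (pullback_action lam sig) E sig snd"
  unfolding rep_hom_def pullback_action_def by auto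

lemma snd_pullback_surj: assumes "f ` carrier L = carrier V" "q ` carrier E \<subseteq> carrier V"
  shows "snd ` carrier (pullback L E f q) = carrier E"
proof
  show "snd ` carrier (pullback L E f q) \<subseteq> carrier E" by auto
  show "carrier E \<subseteq> snd ` carrier (pullback L E f q)"
  proof
    fix e assume e: "e \<in> carrier E"
    then obtain l where l: "l \<in> carrier L" "f l = q e" using assms by (metis image_iff subsetD)
    hence "(l, e) \<in> carrier (pullback L E f q)" using e by simp
    thus "e \<in> snd ` carrier (pullback L E f q)" by (metis image_eqI snd_conv)
  qed
qed

lemma p_multiples_in_lin_span_pullback:
  assumes p: "p \<in> carrier R"
    and S: "finite S" "S \<subseteq> carrier E" "carrier E \<subseteq> lin_span R E S"
    and Gs: "finite Gs" "Gs \<subseteq> carrier (pullback L E f q)" "(\<lambda>s. (\<zero>\<^bsub>L\<^esub>, p \<odot>\<^bsub>E\<^esub> s)) ` S \<subseteq> Gs"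
    and e: "e \<in> carrier E"
  shows "(\<zero>\<^bsub>L\<^esub>, p \<odot>\<^bsub>E\<^esub> e) \<in> lin_span R (pullback L E f q) Gs"
proof -
  interpret L: module R L by (rule module_L)
  interpret E: module R E by (rule module_E)
  interpret P: module R "pullback L E f q" by (rule module_pullback)
  let ?T = "lin_span R (pullback L E f q) Gs"
  define T where "T = {e' \<in> carrier E. (\<zero>\<^bsub>L\<^esub>, p \<odot>\<^bsub>E\<^esub> e') \<in> ?T}"
  have "lin_span R E S \<subseteq> T"
  proof (rule E.lin_span_minimal[OF S(1)])
    show "S \<subseteq> T" unfolding T_def using S Gs P.lin_span_generator[OF Gs(1,2)] by auto
    show "T \<subseteq> carrier E" unfolding T_def by auto
    show "\<zero>\<^bsub>E\<^esub> \<in> T" unfolding T_def using P.zero_in_lin_span[OF Gs(1,2)] p by simp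
  next
    fix x y assume xy: "x \<in> T" "y \<in> T"
    hence "(\<zero>\<^bsub>L\<^esub>, p \<odot>\<^bsub>E\<^esub> x) \<oplus>\<^bsub>pullback L E f q\<^esub> (\<zero>\<^bsub>L\<^esub>, p \<odot>\<^bsub>E\<^esub> y) \<in> ?T"
      unfolding T_def using P.lin_span_add[OF Gs(1,2)] by blast
    thus "x \<oplus>\<^bsub>E\<^esub> y \<in> T" using xy p unfolding T_def by (simp add: E.smult_r_distr)
  next
    fix a x assume a: "a \<in> carrier R" and x: "x \<in> T"
    hence "a \<odot>\<^bsub>pullback L E f q\<^esub> (\<zero>\<^bsub>L\<^esub>, p \<odot>\<^bsub>E\<^esub> x) \<in> ?T"
      unfolding T_def using P.lin_span_smult[OF Gs(1,2)] by blast
    moreover have "a \<odot>\<^bsub>E\<^esub> (p \<odot>\<^bsub>E\<^esub> x) = p \<odot>\<^bsub>E\<^esub> (a \<odot>\<^bsub>E\<^esub> x)"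
      using a p x unfolding T_def by (simp add: E.smult_assoc1[symmetric] L.R.m_comm)
    ultimately show "a \<odot>\<^bsub>E\<^esub> x \<in> T" using a x unfolding T_def by simp
  qed
  thus ?thesis using S(3) e unfolding T_def by blast
qed

lemma fst_in_lin_span_pullback:
  assumes B: "finite B" "B \<subseteq> carrier L" "carrier L \<subseteq> lin_span R L B"
    and Gs: "finite Gs" "Gs \<subseteq> carrier (pullback L E f q)" "\<And>b. b \<in> B \<Longrightarrow> \<exists>e. (b, e) \<in> Gs"
    and l: "l \<in> carrier L"
  shows "\<exists>e. (l, e) \<in> lin_span R (pullback L E f q) Gs"
proof -
  interpret L: module R L by (rule module_L)
  interpret P: module R "pullback L E f q" by (rule module_pullback)
  let ?T = "lin_span R (pullback L E f q) Gs"
  define T where "T = {l \<in> carrier L. \<exists>e. (l, e) \<in> ?T}"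
  have "lin_span R L B \<subseteq> T"
  proof (rule L.lin_span_minimal[OF B(1)])
    show "B \<subseteq> T" unfolding T_def using B Gs P.lin_span_generator[OF Gs(1,2)] by blast
    show "T \<subseteq> carrier L" unfolding T_def by auto
    show "\<zero>\<^bsub>L\<^esub> \<in> T" unfolding T_def using P.zero_in_lin_span[OF Gs(1,2)] by auto
  next
    fix x y assume "x \<in> T" "y \<in> T"
    then obtain ex ey where "(x, ex) \<in> ?T" "(y, ey) \<in> ?T" "x \<in> carrier L" "y \<in> carrier L"
      unfolding T_def by auto
    thus "x \<oplus>\<^bsub>L\<^esub> y \<in> T" unfolding T_def using P.lin_span_add[OF Gs(1,2)] by fastforce
  next
    fix a x assume "a \<in> carrier R" "x \<in> T"
    then obtain ex where "(x, ex) \<in> ?T" "x \<in> carrier L" unfolding T_def by auto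
    thus "a \<odot>\<^bsub>L\<^esub> x \<in> T" unfolding T_def using P.lin_span_smult[OF Gs(1,2)] \<open>a \<in> carrier R\<close>
      by fastforce
  qed
  thus ?thesis using B(3) l unfolding T_def by blast
qed

lemma fin_gen_pullback:
  assumes fgL: "fin_gen R L" and fgE: "fin_gen R E" and p: "p \<in> carrier R"
    and fsurj: "f ` carrier L \<subseteq> q ` carrier E"
    and kern: "\<And>x y. x \<in> carrier E \<Longrightarrow> y \<in> carrier E \<Longrightarrow> q x = q y \<Longrightarrow>
                  \<exists>e'\<in>carrier E. x \<ominus>\<^bsub>E\<^esub> y = p \<odot>\<^bsub>E\<^esub> e'"
    and qp: "\<And>x. x \<in> carrier E \<Longrightarrow> q (p \<odot>\<^bsub>E\<^esub> x) = \<zero>\<^bsub>V\<^esub>"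
  shows "fin_gen R (pullback L E f q)"
proof -
  interpret L: module R L by (rule module_L)
  interpret E: module R E by (rule module_E)
  interpret P: module R "pullback L E f q" by (rule module_pullback)
  obtain B where B: "finite B" "B \<subseteq> carrier L" "carrier L \<subseteq> lin_span R L B"
    using fin_gen_iff_lin_span[THEN iffD1, OF fgL] by blast
  obtain S where S: "finite S" "S \<subseteq> carrier E" "carrier E \<subseteq> lin_span R E S"
    using fin_gen_iff_lin_span[THEN iffD1, OF fgE] by blast
  have "\<forall>b\<in>B. \<exists>e. e \<in> carrier E \<and> q e = f b"
  proof
    fix b assume "b \<in> B"
    hence "f b \<in> q ` carrier E" using fsurj B(2) by blast
    thus "\<exists>e. e \<in> carrier E \<and> q e = f b" by (metis imageE)
  qed
  then obtain eb where eb: "\<And>b. b \<in> B \<Longrightarrow> eb b \<in> carrier E \<and> q (eb b) = f b" by metis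
  define Gs where "Gs = (\<lambda>b. (b, eb b)) ` B \<union> (\<lambda>s. (\<zero>\<^bsub>L\<^esub>, p \<odot>\<^bsub>E\<^esub> s)) ` S"
  have Gf: "finite Gs" unfolding Gs_def using B S by auto
  have Gc: "Gs \<subseteq> carrier (pullback L E f q)"
    unfolding Gs_def using B S eb qp p by (auto simp: f_simps)
  let ?T = "lin_span R (pullback L E f q) Gs"
  have "x \<in> ?T" if x: "x \<in> carrier (pullback L E f q)" for x
  proof -
    obtain l e where le: "x = (l, e)" by (cases x)
    have l: "l \<in> carrier L" and e: "e \<in> carrier E" and fl: "f l = q e" using x le by auto
    obtain e0 where e0: "(l, e0) \<in> ?T"
      using fst_in_lin_span_pullback[OF B Gf Gc _ l] unfolding Gs_def by blast
    hence e0c: "e0 \<in> carrier E" "f l = q e0" using P.lin_span_subset[OF Gf Gc] by auto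
    obtain e' where e': "e' \<in> carrier E" "e \<ominus>\<^bsub>E\<^esub> e0 = p \<odot>\<^bsub>E\<^esub> e'"
      using kern[OF e e0c(1)] fl e0c by auto
    have "(\<zero>\<^bsub>L\<^esub>, p \<odot>\<^bsub>E\<^esub> e') \<in> ?T"
      using p_multiples_in_lin_span_pullback[OF p S Gf Gc _ e'(1)] unfolding Gs_def by blast
    hence "(l, e0) \<oplus>\<^bsub>pullback L E f q\<^esub> (\<zero>\<^bsub>L\<^esub>, p \<odot>\<^bsub>E\<^esub> e') \<in> ?T"
      using P.lin_span_add[OF Gf Gc] e0 by blast
    moreover have "e0 \<oplus>\<^bsub>E\<^esub> (e \<ominus>\<^bsub>E\<^esub> e0) = e"
      using E.a_lcomm[of e0 e "\<ominus>\<^bsub>E\<^esub> e0"] E.r_neg[of e0] e e0c by (simp add: a_minus_def)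
    ultimately show "x \<in> ?T" using le l e' by simp
  qed
  thus ?thesis using Gf Gc by (intro fin_gen_iff_lin_span[THEN iffD2] exI[of _ Gs] conjI) auto
qed

lemma torsion_exponent_pullback:
  assumes dv: "dvr R p" and ffL: "fin_free R L" and torsE: "torsion_exponent R E p (Suc n)"
    and kern: "\<And>x y. x \<in> carrier E \<Longrightarrow> y \<in> carrier E \<Longrightarrow> q x = q y \<Longrightarrow>
                  \<exists>e'\<in>carrier E. x \<ominus>\<^bsub>E\<^esub> y = p \<odot>\<^bsub>E\<^esub> e'"
  shows "torsion_exponent R (pullback L E f q) p n"
  unfolding torsion_exponent_def
proof (intro ballI impI)
  interpret D: dvr R p by fact
  interpret L: module R L by (rule module_L)
  interpret E: module R E by (rule module_E)
  fix x assume x: "x \<in> carrier (pullback L E f q)"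
  obtain l e where le: "x = (l, e)" by (cases x)
  have l: "l \<in> carrier L" and e: "e \<in> carrier E" and fl: "f l = q e" using x le by auto
  assume "\<exists>k::nat. (p [^]\<^bsub>R\<^esub> k) \<odot>\<^bsub>pullback L E f q\<^esub> x = \<zero>\<^bsub>pullback L E f q\<^esub>"
  then obtain k :: nat where k: "(p [^]\<^bsub>R\<^esub> k) \<odot>\<^bsub>L\<^esub> l = \<zero>\<^bsub>L\<^esub>" "(p [^]\<^bsub>R\<^esub> k) \<odot>\<^bsub>E\<^esub> e = \<zero>\<^bsub>E\<^esub>"
    using le by auto
  have l0: "l = \<zero>\<^bsub>L\<^esub>"
    using fin_free_torsion_free[OF module_L D.domain_axioms ffL D.p_pow_closed D.p_pow_nonzero l k(1)] .
  have "q e = q \<zero>\<^bsub>E\<^esub>" using fl l0 f_simps(4) q_simps(4) by simp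
  then obtain e' where e': "e' \<in> carrier E" "e \<ominus>\<^bsub>E\<^esub> \<zero>\<^bsub>E\<^esub> = p \<odot>\<^bsub>E\<^esub> e'"
    using kern[OF e E.zero_closed] by blast
  have ee: "e = p \<odot>\<^bsub>E\<^esub> e'"
    using e'(2) e by (metis E.l_neg E.r_zero E.zero_closed E.add.inv_closed E.r_neg a_minus_def)
  have "(p [^]\<^bsub>R\<^esub> Suc k) \<odot>\<^bsub>E\<^esub> e' = (p [^]\<^bsub>R\<^esub> k) \<odot>\<^bsub>E\<^esub> e"
    unfolding ee using e' D.p_carr by (simp add: E.smult_assoc1)
  hence "(p [^]\<^bsub>R\<^esub> Suc n) \<odot>\<^bsub>E\<^esub> e' = \<zero>\<^bsub>E\<^esub>" using torsE e' k(2) unfolding torsion_exponent_def by metis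
  hence "(p [^]\<^bsub>R\<^esub> n) \<odot>\<^bsub>E\<^esub> e = \<zero>\<^bsub>E\<^esub>"
    unfolding ee using e' D.p_carr by (simp add: E.smult_assoc1)
  thus "(p [^]\<^bsub>R\<^esub> n) \<odot>\<^bsub>pullback L E f q\<^esub> x = \<zero>\<^bsub>pullback L E f q\<^esub>" using le l0 by simp
qed

end

section \<open>Weak lifts by induction on the torsion exponent\<close>

lemma has_weak_lift_via_copy:
  fixes R :: "'r ring" and M :: "('r,'m) module"
  assumes p: "p \<in> carrier R" and M: "in_Rep G R M rho" and tors: "torsion_exponent R M p n"
    and copies: "\<And>(P :: ('r, (nat \<Rightarrow> 'r) set) module) pr.
      in_Rep G R P pr \<Longrightarrow> torsion_exponent R P p n \<Longrightarrow> has_weak_lift G R P pr"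
  shows "has_weak_lift G R M rho"
proof -
  obtain q :: "'m \<Rightarrow> (nat \<Rightarrow> 'r) set" where "rep_copy G R M rho q" using ex_rep_copy[OF M] by blast
  then interpret Q: rep_copy G R M rho q .
  show ?thesis
    using Q.has_weak_lift_from_copy copies[OF Q.in_Rep_quotient[OF M] Q.torsion_exponent_quotient[OF tors p]]
    by blast
qed

lemma has_weak_lift_torsion_exponent_Suc:
  fixes R :: "'r ring" and E :: "('r,'e) module" and G :: "'g monoid"
  assumes dv: "dvr R p"
    and hyp: "\<forall>(V :: ('r, (nat \<Rightarrow> 'r) set) module) rho.
           in_Rep G R V rho \<and> (\<forall>x\<in>carrier V. p \<odot>\<^bsub>V\<^esub> x = \<zero>\<^bsub>V\<^esub>)
           \<longrightarrow> has_weak_lift G R V rho"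
    and IH: "\<And>(P :: ('r, (nat \<Rightarrow> 'r) set) module) pr.
      in_Rep G R P pr \<Longrightarrow> torsion_exponent R P p n \<Longrightarrow> has_weak_lift G R P pr"
    and E: "in_Rep G R E sig" and torsE: "torsion_exponent R E p (Suc n)"
  shows "has_weak_lift G R E sig"
proof -
  interpret D: dvr R p by fact
  have repE: "is_rep G R E sig" and fgE: "fin_gen R E" using E unfolding in_Rep_def by blast+
  obtain q :: "'e \<Rightarrow> (nat \<Rightarrow> 'r) set" where
    "quotient_map G R E sig ((\<lambda>x. p \<odot>\<^bsub>E\<^esub> x) ` carrier E) q"
    using ex_quotient_map_p_multiples[OF E D.p_carr] by blast
  then interpret Q: quotient_map G R E sig "(\<lambda>x. p \<odot>\<^bsub>E\<^esub> x) ` carrier E" q .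
  let ?V = "quotient_module E q" and ?vr = "quotient_action E q sig"
  have qp: "\<And>x. x \<in> carrier E \<Longrightarrow> q (p \<odot>\<^bsub>E\<^esub> x) = \<zero>\<^bsub>?V\<^esub>"
    using Q.q_zero_iff D.p_carr by auto
  have "has_weak_lift G R ?V ?vr"
    using hyp Q.in_Rep_quotient[OF E] Q.quotient_smult_zero[OF D.p_carr] by blast
  then obtain L :: "('r, nat \<Rightarrow> 'r) module" and lam f where
    LR: "in_Rep_free G R L lam" and fh: "rep_hom G R L lam ?V ?vr f" and fs: "f ` carrier L = carrier ?V"
    unfolding has_weak_lift_def is_weak_lift_def by blast
  have repL: "is_rep G R L lam" and fgL: "fin_gen R L" and ffL: "fin_free R L"
    using LR unfolding in_Rep_free_def by blast+
  interpret PB: rep_pullback G R L lam ?V ?vr f E sig q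
    unfolding rep_pullback_def using repL Q.is_rep_quotient repE fh Q.rep_hom_q by blast
  have kern: "\<And>x y. x \<in> carrier E \<Longrightarrow> y \<in> carrier E \<Longrightarrow> q x = q y \<Longrightarrow>
                  \<exists>e'\<in>carrier E. x \<ominus>\<^bsub>E\<^esub> y = p \<odot>\<^bsub>E\<^esub> e'"
    using Q.q_eq by blast
  let ?P = "pullback L E f q" and ?pr = "pullback_action lam sig"
  have "f ` carrier L \<subseteq> q ` carrier E" using fs by simp
  hence PR: "in_Rep G R ?P ?pr"
    unfolding in_Rep_def using PB.is_rep_pullback PB.fin_gen_pullback[OF fgL fgE D.p_carr _ kern qp] by blast
  have "has_weak_lift G R ?P ?pr"
    using has_weak_lift_via_copy[OF D.p_carr PR PB.torsion_exponent_pullback[OF dv ffL torsE kern] IH] .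
  moreover have "snd ` carrier ?P = carrier E" using PB.snd_pullback_surj fs by auto
  ultimately show ?thesis using has_weak_lift_comp PB.rep_hom_snd by blast
qed

lemma has_weak_lift_torsion_exponent:
  fixes R :: "'r ring" and G :: "'g monoid"
  assumes dv: "dvr R p"
    and hyp: "\<forall>(V :: ('r, (nat \<Rightarrow> 'r) set) module) rho.
           in_Rep G R V rho \<and> (\<forall>x\<in>carrier V. p \<odot>\<^bsub>V\<^esub> x = \<zero>\<^bsub>V\<^esub>)
           \<longrightarrow> has_weak_lift G R V rho"
  shows "\<And>(E :: ('r, (nat \<Rightarrow> 'r) set) module) sig.
    in_Rep G R E sig \<Longrightarrow> torsion_exponent R E p n \<Longrightarrow> has_weak_lift G R E sig"
proof (induction n)
  case 0
  interpret D: dvr R p by fact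
  have rep: "is_rep G R E sig" using 0 unfolding in_Rep_def by blast
  interpret module R E using is_rep_module[OF rep] .
  show ?case
  proof (rule torsion_free_has_weak_lift[OF dv 0(1)])
    fix x assume x: "x \<in> carrier E" "p \<odot>\<^bsub>E\<^esub> x = \<zero>\<^bsub>E\<^esub>"
    hence "(p [^]\<^bsub>R\<^esub> (1::nat)) \<odot>\<^bsub>E\<^esub> x = \<zero>\<^bsub>E\<^esub>" using D.p_carr by simp
    hence "(p [^]\<^bsub>R\<^esub> (0::nat)) \<odot>\<^bsub>E\<^esub> x = \<zero>\<^bsub>E\<^esub>" using 0(2) x unfolding torsion_exponent_def by blast
    thus "x = \<zero>\<^bsub>E\<^esub>" using x by simp
  qed
next
  case (Suc n)
  show ?case using has_weak_lift_torsion_exponent_Suc[OF dv hyp Suc.IH Suc.prems] by blast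
qed

theorem proposition4p4:
  fixes R :: "'r ring" and p :: 'r and G :: "'g monoid"
  assumes "dvr_uniformizer R p"
    and "group G"
    and "\<forall>(V :: ('r, (nat \<Rightarrow> 'r) set) module) rho.
           in_Rep G R V rho \<and> (\<forall>x\<in>carrier V. p \<odot>\<^bsub>V\<^esub> x = \<zero>\<^bsub>V\<^esub>)
           \<longrightarrow> has_weak_lift G R V rho"
  shows "\<forall>(E :: ('r, 'e) module) sigma. in_Rep G R E sigma \<longrightarrow> has_weak_lift G R E sigma"
proof (intro allI impI)
  fix E :: "('r, 'e) module" and sigma
  assume E: "in_Rep G R E sigma"
  have dv: "dvr R p" using dvr_uniformizer_imp_dvr[OF assms(1)] .
  have rep: "is_rep G R E sigma" and fg: "fin_gen R E" using E unfolding in_Rep_def by blast+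
  interpret dvr_module R p E unfolding dvr_module_def using dv is_rep_module[OF rep] by blast
  obtain n where "torsion_exponent R E p n" using ex_torsion_exponent[OF fg] by blast
  thus "has_weak_lift G R E sigma"
    using has_weak_lift_via_copy[OF p_carr E] has_weak_lift_torsion_exponent[OF dv assms(3)] by blast
qed

end
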